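(* Consider a sequence (indexed by $N$) of completely randomized nearly uniform designs with $\min_{q\in[Q]}N_q\ge2$, with the constants $\underline c,\overline c$ fixed, satisfying Condition 3 with constant $\Delta$. Let $\hat V_{\hat\gamma}=F^\top\mathrm{diag}(N_q^{-1}\hat S(q,q))_{q\in[Q]}F$. Then (i) $\mathbb E\{\hat V_{\hat\gamma}\}\succeq V_{\hat\gamma}$; (ii) $\|\hat V_{\hat\gamma}-\mathbb E\{\hat V_{\hat\gamma}\}\|_\infty^2=O_{\mathbb P}\big(\|F\|_\infty^4Q^4N^{-3}\Delta^4H^2\big)$; (iii) $\|\hat V_{\hat\gamma}-\mathbb E\{\hat V_{\hat\gamma}\}\|_{\mathrm{op}}^2=O_{\mathbb P}\big(\|F\|_\infty^4Q^4N^{-3}\Delta^4H^4\big)$.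
   Context: Randomization model: there are $N$ units and $Q$ treatment levels with prescribed group sizes $N_1,\dots,N_Q\ge1$, $\sum_qN_q=N$; unit $i\in[N]$ has fixed real potential outcomes $Y_i(1),\dots,Y_i(Q)$. Under complete randomization the treatment vector $Z=(Z_1,\dots,Z_N)$ is uniform over all vectors in $[Q]^N$ with exactly $N_q$ coordinates equal to $q$; the observed outcome is $Y_i=Y_i(Z_i)$. Write $\overline Y(q)=N^{-1}\sum_iY_i(q)$, $S(q,q')=(N-1)^{-1}\sum_i(Y_i(q)-\overline Y(q))(Y_i(q')-\overline Y(q'))$, $S=(S(q,q'))$, $V_{\hat Y}=\mathrm{diag}(N_q^{-1}S(q,q))-N^{-1}S$, $\hat Y_q=N_q^{-1}\sum_{i:Z_i=q}Y_i$ and sample variance $\hat S(q,q)=(N_q-1)^{-1}\sum_{i:Z_i=q}(Y_i-\hat Y_q)^2$. For fixed $F\in\mathbb R^{Q\times H}$, $V_{\hat\gamma}=F^\top V_{\hat Y}F$. Norms: $\|A\|_\infty$ is the maximum absolute entry of a matrix, $\|A\|_{\mathrm{op}}$ the operator (spectral) norm. Nearly uniform design: there are a positive integer $N_0$ and constants $0<\underline c\le\overline c$ with $N_q=c_qN_0$, $\underline c\le c_q\le\overline c$ for all $q$. Condition 3: $\max_{q\in[Q]}N^{-1}\sum_{i=1}^N\{Y_i(q)-\overline Y(q)\}^4\le\Delta^4$. *)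

theory Defs
  imports "HOL-Probability.Probability"
begin

text \<open>Units are 0..<N, treatment levels 0..<Q (shifted from 1..Q), columns of F are 0..<H.
  A treatment vector is a function z :: nat => nat with z i < Q for i < N
  (and z i = 0 outside the units, to make the set of assignments finite).\<close>

definition assignments :: "nat \<Rightarrow> nat \<Rightarrow> (nat \<Rightarrow> nat) \<Rightarrow> (nat \<Rightarrow> nat) set" where
  "assignments N Q Ng =
     {z. (\<forall>i<N. z i < Q) \<and> (\<forall>i. N \<le> i \<longrightarrow> z i = 0) \<and>
         (\<forall>q<Q. card {i. i < N \<and> z i = q} = Ng q)}"

definition complete_rand :: "nat \<Rightarrow> nat \<Rightarrow> (nat \<Rightarrow> nat) \<Rightarrow> (nat \<Rightarrow> nat) pmf" where
  "complete_rand N Q Ng = pmf_of_set (assignments N Q Ng)"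

text \<open>Y i q is the potential outcome of unit i under treatment q.\<close>
definition Ybar :: "nat \<Rightarrow> (nat \<Rightarrow> nat \<Rightarrow> real) \<Rightarrow> nat \<Rightarrow> real" where
  "Ybar N Y q = (\<Sum>i<N. Y i q) / real N"

definition Spop :: "nat \<Rightarrow> (nat \<Rightarrow> nat \<Rightarrow> real) \<Rightarrow> nat \<Rightarrow> nat \<Rightarrow> real" where
  "Spop N Y q q' = (\<Sum>i<N. (Y i q - Ybar N Y q) * (Y i q' - Ybar N Y q')) / (real N - 1)"

definition VY :: "nat \<Rightarrow> (nat \<Rightarrow> nat) \<Rightarrow> (nat \<Rightarrow> nat \<Rightarrow> real) \<Rightarrow> nat \<Rightarrow> nat \<Rightarrow> real" where
  "VY N Ng Y q q' = (if q = q' then Spop N Y q q / real (Ng q) else 0) - Spop N Y q q' / real N"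

definition Vgamma :: "nat \<Rightarrow> nat \<Rightarrow> (nat \<Rightarrow> nat) \<Rightarrow> (nat \<Rightarrow> nat \<Rightarrow> real) \<Rightarrow> (nat \<Rightarrow> nat \<Rightarrow> real)
    \<Rightarrow> nat \<Rightarrow> nat \<Rightarrow> real" where
  "Vgamma N Q Ng Y F h h' = (\<Sum>q<Q. \<Sum>q'<Q. F q h * VY N Ng Y q q' * F q' h')"

definition Yhat :: "nat \<Rightarrow> (nat \<Rightarrow> nat) \<Rightarrow> (nat \<Rightarrow> nat \<Rightarrow> real) \<Rightarrow> (nat \<Rightarrow> nat) \<Rightarrow> nat \<Rightarrow> real" where
  "Yhat N Ng Y z q = (\<Sum>i\<in>{i. i < N \<and> z i = q}. Y i (z i)) / real (Ng q)"

definition Shat :: "nat \<Rightarrow> (nat \<Rightarrow> nat) \<Rightarrow> (nat \<Rightarrow> nat \<Rightarrow> real) \<Rightarrow> (nat \<Rightarrow> nat) \<Rightarrow> nat \<Rightarrow> real" where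
  "Shat N Ng Y z q =
     (\<Sum>i\<in>{i. i < N \<and> z i = q}. (Y i (z i) - Yhat N Ng Y z q)^2) / (real (Ng q) - 1)"

definition Vhat :: "nat \<Rightarrow> nat \<Rightarrow> (nat \<Rightarrow> nat) \<Rightarrow> (nat \<Rightarrow> nat \<Rightarrow> real) \<Rightarrow> (nat \<Rightarrow> nat \<Rightarrow> real)
    \<Rightarrow> (nat \<Rightarrow> nat) \<Rightarrow> nat \<Rightarrow> nat \<Rightarrow> real" where
  "Vhat N Q Ng Y F z h h' = (\<Sum>q<Q. F q h * (Shat N Ng Y z q / real (Ng q)) * F q h')"

definition EVhat :: "nat \<Rightarrow> nat \<Rightarrow> (nat \<Rightarrow> nat) \<Rightarrow> (nat \<Rightarrow> nat \<Rightarrow> real) \<Rightarrow> (nat \<Rightarrow> nat \<Rightarrow> real)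
    \<Rightarrow> nat \<Rightarrow> nat \<Rightarrow> real" where
  "EVhat N Q Ng Y F h h' =
     measure_pmf.expectation (complete_rand N Q Ng) (\<lambda>z. Vhat N Q Ng Y F z h h')"

definition psd :: "nat \<Rightarrow> (nat \<Rightarrow> nat \<Rightarrow> real) \<Rightarrow> bool" where
  "psd H A \<longleftrightarrow> (\<forall>x::nat \<Rightarrow> real. 0 \<le> (\<Sum>h<H. \<Sum>h'<H. x h * A h h' * x h'))"

definition max_norm :: "nat \<Rightarrow> nat \<Rightarrow> (nat \<Rightarrow> nat \<Rightarrow> real) \<Rightarrow> real" where
  "max_norm m n A = Max (insert 0 {\<bar>A i j\<bar> | i j. i < m \<and> j < n})"

definition op_norm :: "nat \<Rightarrow> nat \<Rightarrow> (nat \<Rightarrow> nat \<Rightarrow> real) \<Rightarrow> real" where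
  "op_norm m n A = Sup {sqrt (\<Sum>i<m. (\<Sum>j<n. A i j * x j)^2) | x. (\<Sum>j<n. (x j)^2) \<le> 1}"

definition bigO_P :: "(nat \<Rightarrow> 'a pmf) \<Rightarrow> (nat \<Rightarrow> 'a \<Rightarrow> real) \<Rightarrow> (nat \<Rightarrow> real) \<Rightarrow> bool" where
  "bigO_P P X r \<longleftrightarrow>
     (\<forall>\<epsilon>>0. \<exists>M>0. \<exists>k0. \<forall>k\<ge>k0.
        measure_pmf.prob (P k) {\<omega>. \<bar>X k \<omega>\<bar> > M * r k} < \<epsilon>)"

end

theory Submission
  imports Defs "HOL-Combinatorics.Permutations"
begin

text \<open>Write \<open>resid q i = Y i q - Ybar q\<close> for the centred outcomes and
  \<open>kern q i j = (resid q i - resid q j)\<^sup>2 / 2\<close>. The group sample variance is a U-statistic: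
  \<open>Shat q\<close> is the sum of \<open>kern q i j\<close> over the ordered pairs of units of group \<open>q\<close>, divided
  by \<open>N\<^sub>q (N\<^sub>q - 1)\<close>. Complete randomization is exchangeable, so a list of distinct units falls into prescribed groups with a probability that
  is a ratio of falling factorials. Two units are both in group \<open>q\<close> with probability
  \<open>p\<^sub>q = N\<^sub>q (N\<^sub>q - 1) / (N (N - 1))\<close>, which makes \<open>Shat q\<close> unbiased for \<open>S(q,q)\<close>; hence
  \<open>E Vhat - V = F\<^sup>T S F / N\<close>, a positive multiple of the Gram matrix of the vectors
  \<open>F\<^sup>T resid _ i\<close>.

  The second moment of an entry of \<open>Vhat - E Vhat\<close> is a quadruple sum of kernel products
  weighted by covariances of pair indicators. For four distinct units these covariances are
  \<open>O(p\<^sub>q p\<^sub>s (1/N + 1/N\<^sub>q))\<close>, and when the two pairs share a unit the sum loses an index.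
  With the fourth-moment condition and nearly uniform group sizes, the expected squared
  Frobenius norm of \<open>Vhat - E Vhat\<close> is at most a constant times \<open>\<parallel>F\<parallel>\<^sub>\<infinity>\<^sup>4 Q\<^sup>4 \<Delta>\<^sup>4 H\<^sup>2 / N\<^sup>3\<close>.
  The Frobenius norm dominates the entrywise and the operator norm, and Markov's inequality gives
  the \<open>O\<^sub>P\<close> bounds.\<close>

lemma assignments_finite: "finite (assignments n Q m)"
proof -
  let ?r = "\<lambda>z. restrict z {..<n}"
  have "inj_on ?r (assignments n Q m)"
  proof (rule inj_onI)
    fix x y assume x: "x \<in> assignments n Q m" and y: "y \<in> assignments n Q m" and e: "?r x = ?r y"
    show "x = y"
    proof
      fix i show "x i = y i"
      proof (cases "i < n")
        case True then show ?thesis using e by (metis lessThan_iff restrict_apply')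
      next
        case False then show ?thesis using x y by (auto simp: assignments_def)
      qed
    qed
  qed
  moreover have "?r ` assignments n Q m \<subseteq> PiE {..<n} (\<lambda>_. {..<Q})"
    by (rule image_subsetI, subst restrict_PiE_iff) (auto simp: assignments_def)
  then have "finite (?r ` assignments n Q m)"
    by (rule finite_subset) (simp add: finite_PiE)
  ultimately show ?thesis using finite_image_iff by blast
qed

text \<open>Units are assigned to the groups in consecutive blocks.\<close>

lemma assignments_sum_nonempty: "assignments (\<Sum>q<Q. m q) Q m \<noteq> {}"
proof -
  have "\<exists>z. (\<forall>i<(\<Sum>q<Q. m q). z i < Q) \<and> (\<forall>i. (\<Sum>q<Q. m q) \<le> i \<longrightarrow> z i = 0) \<and>
        (\<forall>q<Q. card {i. i < (\<Sum>q<Q. m q) \<and> z i = q} = m q)"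
  proof (induction Q)
    case 0 then show ?case by (intro exI[of _ "\<lambda>_. 0"]) auto
  next
    case (Suc Q)
    then obtain z where z1: "\<forall>i<(\<Sum>q<Q. m q). z i < Q"
      and z2: "\<forall>i. (\<Sum>q<Q. m q) \<le> i \<longrightarrow> z i = 0"
      and z3: "\<forall>q<Q. card {i. i < (\<Sum>q<Q. m q) \<and> z i = q} = m q" by blast
    define S where "S = (\<Sum>q<Q. m q)"
    define z' where "z' i = (if i < S then z i else if i < S + m Q then Q else 0)" for i
    have sumS: "(\<Sum>q<Suc Q. m q) = S + m Q" by (simp add: S_def)
    show ?case
    proof (intro exI[of _ z'] conjI allI impI)
      fix i assume "i < (\<Sum>q<Suc Q. m q)" then show "z' i < Suc Q"
        using z1 by (auto simp: z'_def S_def sumS)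
    next
      fix i assume "(\<Sum>q<Suc Q. m q) \<le> i" then show "z' i = 0" by (auto simp: z'_def sumS S_def)
    next
      fix q assume q: "q < Suc Q"
      show "card {i. i < (\<Sum>q<Suc Q. m q) \<and> z' i = q} = m q"
      proof (cases "q = Q")
        case True
        have "{i. i < (\<Sum>q<Suc Q. m q) \<and> z' i = q} = {S..<S + m Q}"
          using z1 True unfolding sumS by (auto simp: z'_def S_def not_less[symmetric])
        then show ?thesis using True by simp
      next
        case False
        then have qQ: "q < Q" using q by simp
        have "{i. i < (\<Sum>q<Suc Q. m q) \<and> z' i = q} = {i. i < S \<and> z i = q}"
          unfolding sumS using False qQ by (auto simp: z'_def)
        then show ?thesis using z3 qQ by (simp add: S_def)
      qed
    qed
  qed
  then show ?thesis by (auto simp: assignments_def)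
qed

lemma assignments_nonempty: "(\<Sum>q<Q. m q) = n \<Longrightarrow> assignments n Q m \<noteq> {}"
  using assignments_sum_nonempty by blast

lemma assignments_comp_permutes:
  assumes p: "p permutes {..<n}" and z: "z \<in> assignments n Q m"
  shows "z \<circ> p \<in> assignments n Q m"
proof -
  have pin: "\<And>i. i < n \<Longrightarrow> p i < n" using p by (meson lessThan_iff permutes_in_image)
  have pout: "\<And>i. n \<le> i \<Longrightarrow> p i = i" using p by (simp add: permutes_not_in)
  have "card {i. i < n \<and> (z \<circ> p) i = q} = card {i. i < n \<and> z i = q}" for q
  proof -
    have "p ` {i. i < n \<and> (z \<circ> p) i = q} = {i. i < n \<and> z i = q}"
    proof
      show "p ` {i. i < n \<and> (z \<circ> p) i = q} \<subseteq> {i. i < n \<and> z i = q}" using pin by auto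
      show "{i. i < n \<and> z i = q} \<subseteq> p ` {i. i < n \<and> (z \<circ> p) i = q}"
      proof
        fix j assume j: "j \<in> {i. i < n \<and> z i = q}"
        obtain i where i: "p i = j" using p by (metis permutes_surj surj_def)
        have "i < n" using i j pout by (metis mem_Collect_eq not_le)
        then show "j \<in> p ` {i. i < n \<and> (z \<circ> p) i = q}" using i j by auto
      qed
    qed
    moreover have "inj_on p {i. i < n \<and> (z \<circ> p) i = q}"
      using p by (meson permutes_inj_on)
    ultimately show ?thesis using card_image by fastforce
  qed
  then show ?thesis using z pin pout by (simp add: assignments_def)
qed

lemma sum_assignments_comp_permutes:
  assumes p: "p permutes {..<n}"
  shows "(\<Sum>z\<in>assignments n Q m. f (z \<circ> p)) = (\<Sum>z\<in>assignments n Q m. f z)"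
proof -
  have inj: "inj_on (\<lambda>z. z \<circ> p) (assignments n Q m)"
    by (rule inj_onI) (metis comp_assoc permutes_inv_o(1)[OF p] comp_id)
  have "(\<lambda>z. z \<circ> p) ` assignments n Q m = assignments n Q m"
  proof
    show "(\<lambda>z. z \<circ> p) ` assignments n Q m \<subseteq> assignments n Q m"
      using assignments_comp_permutes[OF p] by auto
    show "assignments n Q m \<subseteq> (\<lambda>z. z \<circ> p) ` assignments n Q m"
    proof
      fix z assume z: "z \<in> assignments n Q m"
      have "z = (z \<circ> inv p) \<circ> p" using p by (simp add: comp_assoc permutes_inv_o)
      then show "z \<in> (\<lambda>z. z \<circ> p) ` assignments n Q m"
        using assignments_comp_permutes[OF permutes_inv[OF p] z] by blast
    qed
  qed
  then show ?thesis using sum.reindex[OF inj, of f] by simp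
qed

lemma exists_permutes_map_distinct:
  "length xs = length ys \<Longrightarrow> distinct xs \<Longrightarrow> distinct ys \<Longrightarrow> set xs \<subseteq> S \<Longrightarrow> set ys \<subseteq> S
   \<Longrightarrow> \<exists>p. p permutes S \<and> map p ys = xs"
proof (induction xs arbitrary: ys)
  case Nil then show ?case by (intro exI[of _ id]) (auto simp: permutes_id[unfolded id_def])
next
  case (Cons x xs)
  then obtain y ys' where ys: "ys = y # ys'" by (metis length_Suc_conv)
  with Cons obtain p where p: "p permutes S" "map p ys' = xs" by auto
  define p' where "p' = Transposition.transpose (p y) x \<circ> p"
  have py: "p y \<in> S" using p Cons ys by (auto intro: permutes_in_image[THEN iffD2])
  have "p' permutes S" unfolding p'_def
    using p(1) permutes_swap_id[OF py, of x] Cons by (auto intro: permutes_compose)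
  moreover have "map p' ys = x # xs"
  proof -
    have "p y \<notin> set xs"
    proof
      assume "p y \<in> set xs"
      then obtain y' where "y' \<in> set ys'" "p y' = p y" using p(2) by auto
      then show False using Cons ys p(1) by (metis distinct.simps(2) permutes_inj injD)
    qed
    moreover have "x \<notin> set xs" using Cons by simp
    ultimately have "map (Transposition.transpose (p y) x) xs = xs"
      by (intro map_idI) (auto simp: Transposition.transpose_def)
    then show ?thesis using p(2) unfolding p'_def ys
      by (simp add: Transposition.transpose_def flip: map_map)
  qed
  ultimately show ?case by (intro exI[of _ p'] conjI)
qed

lemma prod_top_segment_eq: fixes L c :: nat shows "L \<le> c \<Longrightarrow> \<Prod>{c - L + 1..c} = (\<Prod>t<L. c - t)"
proof (induction L)
  case 0 then show ?case by simp
next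
  case (Suc L)
  have "{c - Suc L + 1..c} = insert (c - L) {c - L + 1..c}"
    using Suc.prems by (auto simp: Suc_diff_Suc)
  then have "\<Prod>{c - Suc L + 1..c} = (c - L) * \<Prod>{c - L + 1..c}" by simp
  then show ?case using Suc by (simp add: mult.commute)
qed

lemma card_distinct_lists_subset:
  assumes "finite G"
  shows "card {xs. length xs = L \<and> distinct xs \<and> set xs \<subseteq> G} = (\<Prod>t<L. card G - t)"
proof (cases "L \<le> card G")
  case True
  then show ?thesis using card_lists_distinct_length_eq[OF assms True] prod_top_segment_eq[OF True]
    by simp
next
  case False
  have "{xs. length xs = L \<and> distinct xs \<and> set xs \<subseteq> G} = {}"
    using False assms by (auto dest: card_mono simp: distinct_card)
  moreover have "(\<Prod>t<L. card G - t) = 0"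
    using False by (intro prod_zero) (auto intro!: bexI[of _ "card G"])
  ultimately show ?thesis by (metis card.empty)
qed

lemma map_eq_replicate_length_iff:
  "map z ys = replicate (length ys) q \<longleftrightarrow> (\<forall>y\<in>set ys. z y = q)"
  by (induction ys) auto

definition falling_fact :: "nat \<Rightarrow> nat \<Rightarrow> real" where
  "falling_fact c L = (\<Prod>t<L. real (c - t))"

lemma falling_fact_pos: "L \<le> c \<Longrightarrow> 0 < falling_fact c L"
  unfolding falling_fact_def by (intro prod_pos) auto

lemma falling_fact_nonneg: "0 \<le> falling_fact c L"
  by (simp add: falling_fact_def prod_nonneg)

lemma falling_fact_Suc: "falling_fact c (Suc L) = falling_fact c L * real (c - L)"
  by (simp add: falling_fact_def)

lemma falling_fact_2: "1 \<le> c \<Longrightarrow> falling_fact c 2 = real c * (real c - 1)"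
  by (simp add: falling_fact_def numeral_2_eq_2 lessThan_Suc of_nat_diff)

lemma falling_fact_4:
  assumes "2 \<le> c"
  shows "falling_fact c 4 = falling_fact c 2 * ((real c - 2) * (real c - 3))"
proof -
  have "falling_fact c 4 = falling_fact c 2 * (real (c - 2) * real (c - 3))"
    by (simp add: falling_fact_def numeral_eq_Suc lessThan_Suc)
  also have "real (c - 2) * real (c - 3) = (real c - 2) * (real c - 3)"
    using assms by (cases "c = 2") (simp_all add: of_nat_diff)
  finally show ?thesis .
qed

lemma falling_fact_ratio_le:
  assumes "c \<le> N" "L \<le> N"
  shows "falling_fact c L / falling_fact N L \<le> (real c / real N) ^ L"
  using assms(2)
proof (induction L)
  case 0 then show ?case by (simp add: falling_fact_def)
next
  case (Suc L)
  have r: "real (c - L) / real (N - L) \<le> real c / real N"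
  proof (cases "L \<le> c")
    case True
    have "real L * real c \<le> real L * real N" using assms(1) by (intro mult_left_mono) auto
    then have "real (c - L) * real N \<le> real c * real (N - L)"
      using True Suc.prems by (simp add: of_nat_diff algebra_simps)
    then show ?thesis using Suc.prems by (simp add: divide_simps)
  qed simp
  have "falling_fact c (Suc L) / falling_fact N (Suc L)
      = (falling_fact c L / falling_fact N L) * (real (c - L) / real (N - L))"
    by (simp add: falling_fact_Suc)
  also have "\<dots> \<le> (real c / real N) ^ L * (real c / real N)"
    using Suc r by (intro mult_mono) (auto simp: falling_fact_nonneg)
  finally show ?case by (simp add: mult.commute)
qed

lemma sum_indicator_mult_eq_sum_filter:
  fixes f :: "nat \<Rightarrow> real"
  shows "(\<Sum>i<n. (if z i = q then 1 else 0) * f i) = (\<Sum>i\<in>{i. i < n \<and> z i = q}. f i)"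
proof -
  have "(\<Sum>i<n. (if z i = q then 1 else 0) * f i) = (\<Sum>i<n. if z i = q then f i else 0)"
    by (intro sum.cong) auto
  also have "\<dots> = sum f {i \<in> {..<n}. z i = q}"
    by (rule sum.inter_filter[symmetric]) simp
  finally show ?thesis by (simp add: conj_commute)
qed

lemma sum_sum_half_sq_diff:
  fixes x :: "'a \<Rightarrow> real"
  assumes "finite G"
  shows "(\<Sum>i\<in>G. \<Sum>j\<in>G. (x i - x j)^2 / 2) = card G * (\<Sum>i\<in>G. (x i)^2) - (\<Sum>i\<in>G. x i)^2"
proof -
  have "(\<Sum>i\<in>G. \<Sum>j\<in>G. (x i - x j)^2 / 2)
      = (\<Sum>i\<in>G. \<Sum>j\<in>G. (x i)^2 / 2 + (x j)^2 / 2 - x i * x j)"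
    by (intro sum.cong refl) (simp add: power2_diff field_simps)
  also have "\<dots> = (\<Sum>i\<in>G. card G * (x i)^2 / 2 + (\<Sum>j\<in>G. (x j)^2) / 2 - x i * (\<Sum>j\<in>G. x j))"
    by (intro sum.cong refl) (simp add: sum.distrib sum_subtractf sum_distrib_left sum_divide_distrib)
  also have "\<dots> = card G * (\<Sum>i\<in>G. (x i)^2) / 2 + card G * (\<Sum>j\<in>G. (x j)^2) / 2
      - (\<Sum>i\<in>G. x i) * (\<Sum>j\<in>G. x j)"
    by (simp only: sum.distrib sum_subtractf)
       (simp add: sum_distrib_right[symmetric] sum_divide_distrib[symmetric] sum_distrib_left[symmetric])
  also have "\<dots> = card G * (\<Sum>i\<in>G. (x i)^2) - (\<Sum>i\<in>G. x i)^2"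
    by (simp add: power2_eq_square)
  finally show ?thesis .
qed

lemma sum_sq_deviation_from_mean:
  fixes x :: "'a \<Rightarrow> real"
  assumes "finite G" "card G > 0"
  shows "(\<Sum>i\<in>G. (x i - (\<Sum>j\<in>G. x j) / card G)^2)
       = (\<Sum>i\<in>G. (x i)^2) - (\<Sum>i\<in>G. x i)^2 / card G"
proof -
  let ?c = "(\<Sum>j\<in>G. x j) / card G"
  have "(\<Sum>i\<in>G. (x i - ?c)^2) = (\<Sum>i\<in>G. (x i)^2 - 2 * ?c * x i + ?c^2)"
    by (intro sum.cong refl) (simp add: power2_diff)
  also have "\<dots> = (\<Sum>i\<in>G. (x i)^2) - 2 * ?c * (\<Sum>i\<in>G. x i) + card G * ?c^2"
    by (simp add: sum.distrib sum_subtractf sum_distrib_left)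
  also have "\<dots> = (\<Sum>i\<in>G. (x i)^2) - (\<Sum>i\<in>G. x i)^2 / card G"
    using assms by (simp add: field_simps power2_eq_square)
  finally show ?thesis .
qed

lemma quadratic_form_gram_nonneg:
  fixes v :: "nat \<Rightarrow> nat \<Rightarrow> real"
  assumes c: "0 \<le> c"
  shows "0 \<le> (\<Sum>h<H. \<Sum>h'<H. x h * (\<Sum>t<T. c * v t h * v t h') * x h')"
proof -
  have "(\<Sum>h<H. \<Sum>h'<H. x h * (\<Sum>t<T. c * v t h * v t h') * x h')
      = (\<Sum>h<H. \<Sum>h'<H. \<Sum>t<T. c * (x h * v t h) * (x h' * v t h'))"
    by (intro sum.cong refl) (simp add: sum_distrib_left sum_distrib_right mult_ac)
  also have "\<dots> = (\<Sum>t<T. \<Sum>h<H. \<Sum>h'<H. c * (x h * v t h) * (x h' * v t h'))"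
    by (subst sum.swap) (simp add: sum.swap[of _ "{..<H}" "{..<T}"])
  also have "\<dots> = (\<Sum>t<T. c * (\<Sum>h<H. x h * v t h)^2)"
    by (intro sum.cong refl) (simp add: power2_eq_square sum_distrib_left sum_distrib_right mult_ac)
  also have "0 \<le> \<dots>" using c by (intro sum_nonneg mult_nonneg_nonneg) auto
  finally show ?thesis .
qed

definition kron :: "nat \<Rightarrow> nat \<Rightarrow> real" where
  "kron a b = (if a = b then 1 else 0)"

lemma kron_nonneg: "0 \<le> kron a b"
  by (simp add: kron_def)

lemma sum_mult_kron: "i < n \<Longrightarrow> (\<Sum>k<n. f k * kron i k) = f i"
  by (simp add: kron_def if_distrib sum.delta cong: if_cong)

lemma sum_sum_mult_kron: "i < n \<Longrightarrow> (\<Sum>k<n. \<Sum>l<n. f k l * kron i k) = (\<Sum>l<n. f i l)"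
  by (simp add: sum_distrib_right[symmetric] sum_mult_kron)

lemma sum3_products_le:
  fixes f g :: "nat \<Rightarrow> nat \<Rightarrow> real" and x y :: "nat \<Rightarrow> real"
  assumes f: "\<And>a b. 0 \<le> f a b \<and> f a b \<le> x a + x b"
    and g: "\<And>a b. 0 \<le> g a b \<and> g a b \<le> y a + y b"
    and x: "\<And>a. 0 \<le> x a" and y: "\<And>a. 0 \<le> y a"
  shows "(\<Sum>a<n. \<Sum>b<n. \<Sum>c<n. f a b * g a c)
     \<le> real n ^ 2 * (\<Sum>a<n. x a * y a) + 3 * real n * (\<Sum>a<n. x a) * (\<Sum>a<n. y a)"
proof -
  have "(\<Sum>a<n. \<Sum>b<n. \<Sum>c<n. f a b * g a c)
      \<le> (\<Sum>a<n. \<Sum>b<n. \<Sum>c<n. (x a + x b) * (y a + y c))"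
    using f g by (intro sum_mono mult_mono) (auto intro: add_nonneg_nonneg x y)
  also have "\<dots> = (\<Sum>a<n. (\<Sum>b<n. x a + x b) * (\<Sum>c<n. y a + y c))"
    by (simp add: sum_product)
  also have "\<dots> = (\<Sum>a<n. (real n * x a + (\<Sum>b<n. x b)) * (real n * y a + (\<Sum>c<n. y c)))"
    by (simp add: sum.distrib)
  also have "\<dots> = (\<Sum>a<n. (real n ^ 2) * (x a * y a) + (real n * (\<Sum>c<n. y c)) * x a
        + (real n * (\<Sum>b<n. x b)) * y a + (\<Sum>b<n. x b) * (\<Sum>c<n. y c))"
    by (intro sum.cong refl) (simp add: algebra_simps power2_eq_square)
  also have "\<dots> = real n ^ 2 * (\<Sum>a<n. x a * y a) + (real n * (\<Sum>c<n. y c)) * (\<Sum>a<n. x a)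
        + (real n * (\<Sum>b<n. x b)) * (\<Sum>a<n. y a) + real n * ((\<Sum>b<n. x b) * (\<Sum>c<n. y c))"
    by (simp only: sum.distrib sum_distrib_left[symmetric] sum_constant card_lessThan)
       (simp add: mult.commute)
  also have "\<dots> = real n ^ 2 * (\<Sum>a<n. x a * y a) + 3 * real n * (\<Sum>a<n. x a) * (\<Sum>a<n. y a)"
    by (simp add: algebra_simps)
  finally show ?thesis .
qed

text \<open>\<open>N (N - 1) / ((N - 2) (N - 3))\<close> is the square of the falling factorial of order 2 divided
  by the one of order 4; that it is \<open>1 + O(1/N)\<close> is why two disjoint pairs of units fall into
  prescribed groups almost independently.\<close>

lemma falling_ratio_bounds:
  fixes N :: real assumes "4 \<le> N"
  shows "1 \<le> N*(N-1)/((N-2)*(N-3))" and "N*(N-1)/((N-2)*(N-3)) - 1 \<le> 32/N"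
proof -
  have pos: "(N-2)*(N-3) > 0" using assms by (simp add: mult_pos_pos)
  have "(N-2)*(N-3) \<le> N*(N-1)" using assms by (simp add: algebra_simps)
  then show "1 \<le> N*(N-1)/((N-2)*(N-3))" using pos by simp
  have "0 \<le> (N-4)*(28*N-42)" using assms by (intro mult_nonneg_nonneg) auto
  then have "(4*N-6)*N \<le> 32*((N-2)*(N-3))" by (simp add: algebra_simps)
  then have "(4*N - 6)/((N-2)*(N-3)) \<le> 32/N"
    using pos assms by (simp add: divide_simps mult.commute)
  moreover have "N*(N-1)/((N-2)*(N-3)) - 1 = (4*N - 6)/((N-2)*(N-3))"
    using pos by (simp add: field_simps)
  ultimately show "N*(N-1)/((N-2)*(N-3)) - 1 \<le> 32/N" by simp
qed

lemma product_near_one_abs_le: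
  fixes u b a N :: real
  assumes u: "0 \<le> u" "u \<le> 1" "1 - u \<le> 4 / a" and a: "0 < a"
    and b: "1 \<le> b" "b - 1 \<le> 32 / N" and N: "0 < N"
  shows "\<bar>u * b - 1\<bar> \<le> 32 * (1 / N + 1 / a)"
proof -
  have "u * b \<le> b" using u b by (simp add: mult_left_le_one_le)
  then have up: "u * b - 1 \<le> 32 / N + 32 / a" using b a by (smt (verit) divide_nonneg_nonneg)
  have "u \<le> u * b" using u b by (simp add: mult_le_cancel_left1)
  moreover have "4 / a \<le> 32 / a" using a by (simp add: divide_right_mono)
  ultimately have "1 - u * b \<le> 32 / N + 32 / a" using u N by (smt (verit) divide_nonneg_nonneg)
  with up show ?thesis by (simp add: abs_le_iff)
qed

lemma ratio_pred_le_2: "(2::real) \<le> N \<Longrightarrow> N / (N - 1) \<le> 2"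
  by (simp add: divide_simps)

lemma cross_term_bound:
  fixes N D S :: real assumes N: "0 < N" and D: "0 < D" and ND: "N / D \<le> 2"
  shows "48 * N ^ 3 * (S / (N * D))^2 \<le> 192 * S^2 / N"
proof -
  have "48 * N ^ 3 * (S / (N * D))^2 = (48 * (N / D)^2) * (S^2 / N)"
    using N D by (simp add: field_simps power2_eq_square power3_eq_cube)
  also have "\<dots> \<le> (48 * 2^2) * (S^2 / N)"
    using N D ND by (intro mult_right_mono mult_left_mono power_mono) auto
  finally show ?thesis by simp
qed

lemma diag_term_bound:
  fixes M N a D E :: real assumes M: "0 < M" and N: "0 < N" and D: "0 < D" and E: "0 < E"
    and r1: "N / D \<le> 2" "M / E \<le> 2" and r2: "1 / E \<le> 1"
  shows "(a / (M * (M * E)))^2 * (32 * N^4 * (M * E / (N * D))^2 / M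
          + 16 * N^3 * (M / N)^3 + 8 * N^2 * (M * E / (N * D))) \<le> 208 * a^2 / M^3"
proof -
  have e: "(a / (M * (M * E)))^2 * (32 * N^4 * (M * E / (N * D))^2 / M
          + 16 * N^3 * (M / N)^3 + 8 * N^2 * (M * E / (N * D)))
      = (a^2 / M^3) * (32 * (N / D)^2 + 16 * (M / E)^2 + 8 * (N / D) * (1 / E))"
    using M N D E by (simp add: field_simps power2_eq_square power3_eq_cube power4_eq_xxxx)
  have "32 * (N / D)^2 + 16 * (M / E)^2 + 8 * (N / D) * (1 / E) \<le> 32 * 2^2 + 16 * 2^2 + 8 * 2 * 1"
  proof -
    have r0: "0 \<le> N / D" "0 \<le> M / E" "0 \<le> 1 / E" using M N D E by auto
    have "(N / D)^2 \<le> 2^2" "(M / E)^2 \<le> 2^2" using r1 r0 by (intro power_mono; simp)+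
    moreover have "(N / D) * (1 / E) \<le> 2 * 1" using r1 r0 r2 by (intro mult_mono) auto
    ultimately show ?thesis by linarith
  qed
  then have "(a^2 / M^3) * (32 * (N / D)^2 + 16 * (M / E)^2 + 8 * (N / D) * (1 / E)) \<le> (a^2 / M^3) * 208"
    using M by (intro mult_left_mono) auto
  then show ?thesis unfolding e by (simp add: mult.commute)
qed
lemma inverse_group_sizes_rate:
  fixes Q :: nat and n cup clow :: real and m :: "nat \<Rightarrow> nat"
  assumes inv: "\<And>q. q < Q \<Longrightarrow> 1 / real (m q) \<le> real Q * cup / (clow * n)"
    and n: "0 < n" and c: "0 < clow" "0 < cup"
  shows "192 * (\<Sum>q<Q. 1 / real (m q))^2 / n + 208 * (\<Sum>q<Q. 1 / real (m q) ^ 3)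
     \<le> (192 * cup^2 / clow^2 + 208 * cup^3 / clow^3) * (real Q ^ 4 / n ^ 3)"
proof -
  let ?K = "real Q * cup / (clow * n)"
  have s1: "(\<Sum>q<Q. 1 / real (m q)) \<le> real Q * ?K"
    using sum_bounded_above[of "{..<Q}" "\<lambda>q. 1 / real (m q)" ?K] inv by simp
  have s1': "0 \<le> (\<Sum>q<Q. 1 / real (m q))" by (intro sum_nonneg) simp
  have s3: "(\<Sum>q<Q. 1 / real (m q) ^ 3) \<le> real Q * ?K ^ 3"
  proof -
    have "\<And>q. q < Q \<Longrightarrow> 1 / real (m q) ^ 3 \<le> ?K ^ 3"
    proof -
      fix q assume q: "q < Q"
      have "(1 / real (m q)) ^ 3 \<le> ?K ^ 3" using inv[OF q] by (intro power_mono) auto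
      then show "1 / real (m q) ^ 3 \<le> ?K ^ 3" by (simp add: power_one_over)
    qed
    then show ?thesis using sum_bounded_above[of "{..<Q}" "\<lambda>q. 1 / real (m q) ^ 3" "?K ^ 3"] by simp
  qed
  have "192 * (\<Sum>q<Q. 1 / real (m q))^2 / n \<le> 192 * (real Q * ?K)^2 / n"
    using s1 s1' n by (intro divide_right_mono mult_left_mono power_mono) auto
  also have "\<dots> = 192 * cup^2 / clow^2 * (real Q ^ 4 / n ^ 3)"
    using n c by (simp add: field_simps power2_eq_square power3_eq_cube power4_eq_xxxx)
  finally have A: "192 * (\<Sum>q<Q. 1 / real (m q))^2 / n \<le> 192 * cup^2 / clow^2 * (real Q ^ 4 / n ^ 3)" .
  have "208 * (\<Sum>q<Q. 1 / real (m q) ^ 3) \<le> 208 * (real Q * ?K ^ 3)" using s3 by simp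
  also have "\<dots> = 208 * cup^3 / clow^3 * (real Q ^ 4 / n ^ 3)"
    using n c by (simp add: field_simps power2_eq_square power3_eq_cube power4_eq_xxxx)
  finally have B: "208 * (\<Sum>q<Q. 1 / real (m q) ^ 3) \<le> 208 * cup^3 / clow^3 * (real Q ^ 4 / n ^ 3)" .
  show ?thesis using add_mono[OF A B] by (simp only: distrib_right)
qed

lemma finite_abs_entries:
  fixes A :: "nat \<Rightarrow> nat \<Rightarrow> real"
  shows "finite {\<bar>A i j\<bar> | i j. i < a \<and> j < b}"
proof -
  have "{\<bar>A i j\<bar> | i j. i < a \<and> j < b} = (\<lambda>(i,j). \<bar>A i j\<bar>) ` ({..<a} \<times> {..<b})" by auto
  then show ?thesis by simp
qed

lemma max_norm_entry: "i < a \<Longrightarrow> j < b \<Longrightarrow> \<bar>A i j\<bar> \<le> max_norm a b A"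
  unfolding max_norm_def using finite_abs_entries by (intro Max_ge) auto

lemma max_norm_sq_le: "(max_norm a b A)^2 \<le> (\<Sum>i<a. \<Sum>j<b. (A i j)^2)"
proof -
  have "max_norm a b A \<in> insert 0 {\<bar>A i j\<bar> | i j. i < a \<and> j < b}"
    unfolding max_norm_def using finite_abs_entries by (intro Max_in) auto
  then consider "max_norm a b A = 0" | i j where "i < a" "j < b" "max_norm a b A = \<bar>A i j\<bar>"
    by auto
  then show ?thesis
  proof cases
    case 1 then show ?thesis by (simp add: sum_nonneg)
  next
    case (2 i j)
    have "(A i j)^2 \<le> (\<Sum>j'<b. (A i j')^2)"
      using 2 by (intro member_le_sum[where f = "\<lambda>j'. (A i j')^2"]) auto
    also have "\<dots> \<le> (\<Sum>i'<a. \<Sum>j'<b. (A i' j')^2)"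
      using 2 by (intro member_le_sum[where f = "\<lambda>i'. \<Sum>j'<b. (A i' j')^2"]) (auto intro: sum_nonneg)
    finally show ?thesis using 2 by simp
  qed
qed

lemma op_norm_sq_le:
  "(op_norm a b A)^2 \<le> (\<Sum>i<a. \<Sum>j<b. (A i j)^2)"
proof -
  let ?S = "{sqrt (\<Sum>i<a. (\<Sum>j<b. A i j * x j)^2) | x. (\<Sum>j<b. (x j)^2) \<le> 1}"
  let ?F = "\<Sum>i<a. \<Sum>j<b. (A i j)^2"
  have F0: "0 \<le> ?F" by (intro sum_nonneg) auto
  have ub: "y \<le> sqrt ?F" if yS: "y \<in> ?S" for y
  proof -
    obtain x where x: "(\<Sum>j<b. (x j)^2) \<le> 1" and y: "y = sqrt (\<Sum>i<a. (\<Sum>j<b. A i j * x j)^2)"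
      using yS by blast
    have "(\<Sum>i<a. (\<Sum>j<b. A i j * x j)^2) \<le> (\<Sum>i<a. (\<Sum>j<b. (A i j)^2) * (\<Sum>j<b. (x j)^2))"
      by (intro sum_mono Cauchy_Schwarz_ineq_sum)
    also have "\<dots> \<le> (\<Sum>i<a. (\<Sum>j<b. (A i j)^2) * 1)"
      using x by (intro sum_mono mult_left_mono) (auto intro: sum_nonneg)
    finally show ?thesis unfolding y by simp
  qed
  have ne: "0 \<in> ?S" by (intro CollectI exI[of _ "\<lambda>_. 0"]) simp
  have bdd: "bdd_above ?S" using ub by (intro bdd_aboveI) blast
  have "op_norm a b A \<le> sqrt ?F"
    unfolding op_norm_def using ne ub by (intro cSup_least) auto
  moreover have "0 \<le> op_norm a b A"
    unfolding op_norm_def using ne bdd by (intro cSup_upper2[of 0]) auto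
  ultimately have "(op_norm a b A)^2 \<le> (sqrt ?F)^2" by (intro power_mono) auto
  then show ?thesis using F0 by simp
qed

lemma prob_pmf_of_set_gt_le:
  assumes fin: "finite S" and ne: "S \<noteq> {}" and X0: "\<And>z. z \<in> S \<Longrightarrow> 0 \<le> X z" and t: "0 < t"
  shows "measure_pmf.prob (pmf_of_set S) {z. t < \<bar>X z\<bar>} \<le> (\<Sum>z\<in>S. X z) / card S / t"
proof -
  let ?B = "{z. t < \<bar>X z\<bar>}"
  have "real (card (S \<inter> ?B)) * t = (\<Sum>z\<in>S \<inter> ?B. t)" by simp
  also have "\<dots> \<le> (\<Sum>z\<in>S \<inter> ?B. X z)" using X0 by (intro sum_mono) auto
  also have "\<dots> \<le> (\<Sum>z\<in>S. X z)" using X0 fin by (intro sum_mono2) auto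
  finally have "real (card (S \<inter> ?B)) \<le> (\<Sum>z\<in>S. X z) / t" using t by (simp add: field_simps)
  then have "real (card (S \<inter> ?B)) / card S \<le> (\<Sum>z\<in>S. X z) / t / card S"
    by (rule divide_right_mono) simp
  then show ?thesis using measure_pmf_of_set[OF ne fin, of ?B] by (simp add: divide_divide_eq_left mult.commute)
qed

lemma bigO_P_of_mean_le:
  fixes P :: "nat \<Rightarrow> 'a pmf" and S :: "nat \<Rightarrow> 'a set" and X :: "nat \<Rightarrow> 'a \<Rightarrow> real"
  assumes P: "\<And>k. P k = pmf_of_set (S k)" and fin: "\<And>k. finite (S k)" and ne: "\<And>k. S k \<noteq> {}"
    and X0: "\<And>k z. z \<in> S k \<Longrightarrow> 0 \<le> X k z"
    and mean: "\<And>k. (\<Sum>z\<in>S k. X k z) / card (S k) \<le> C * r k"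
    and r0: "\<And>k. 0 \<le> r k" and C0: "0 \<le> C"
  shows "bigO_P P X r"
  unfolding bigO_P_def
proof (intro allI impI)
  fix \<epsilon> :: real assume \<epsilon>: "0 < \<epsilon>"
  define M where "M = 2 * (C + 1) / \<epsilon>"
  have M0: "0 < M" using \<epsilon> C0 by (simp add: M_def)
  have "measure_pmf.prob (P k) {\<omega>. M * r k < \<bar>X k \<omega>\<bar>} \<le> C / M" for k
  proof (cases "r k = 0")
    case True
    have "(\<Sum>z\<in>S k. X k z) = 0"
      using mean[of k] True sum_nonneg[of "S k" "X k"] X0 fin[of k] ne[of k]
      by (simp add: divide_le_0_iff card_gt_0_iff)
    then have "S k \<inter> {\<omega>. M * r k < \<bar>X k \<omega>\<bar>} = {}"
      using sum_nonneg_eq_0_iff[OF fin[of k]] X0 True by auto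
    then show ?thesis unfolding P using measure_pmf_of_set[OF ne fin] C0 M0 by simp
  next
    case False
    then have "0 < M * r k" using M0 r0[of k] by simp
    then have "measure_pmf.prob (P k) {\<omega>. M * r k < \<bar>X k \<omega>\<bar>}
        \<le> (\<Sum>z\<in>S k. X k z) / card (S k) / (M * r k)"
      unfolding P using fin ne X0 by (intro prob_pmf_of_set_gt_le)
    also have "\<dots> \<le> C * r k / (M * r k)"
      using mean[of k] \<open>0 < M * r k\<close> by (intro divide_right_mono) auto
    finally show ?thesis using False by simp
  qed
  moreover have "C / M < \<epsilon>"
  proof -
    have "C * \<epsilon> < 2 * (C + 1) * \<epsilon>" using \<epsilon> C0 by simp
    then show ?thesis using \<epsilon> C0 by (simp add: M_def field_simps)
  qed
  ultimately show "\<exists>M>0. \<exists>k0. \<forall>k\<ge>k0. measure_pmf.prob (P k) {\<omega>. \<bar>X k \<omega>\<bar> > M * r k} < \<epsilon>"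
    using M0 by (meson le_less_trans)
qed

lemma bigO_P_mono:
  assumes "bigO_P P X r" and r: "\<And>k. 0 \<le> r k" "\<And>k. r k \<le> r' k"
    and X: "\<And>k \<omega>. \<bar>X' k \<omega>\<bar> \<le> \<bar>X k \<omega>\<bar>"
  shows "bigO_P P X' r'"
  unfolding bigO_P_def
proof (intro allI impI)
  fix \<epsilon> :: real assume "0 < \<epsilon>"
  then obtain M k0 where M: "0 < M"
    and small: "\<And>k. k \<ge> k0 \<Longrightarrow> measure_pmf.prob (P k) {\<omega>. \<bar>X k \<omega>\<bar> > M * r k} < \<epsilon>"
    using assms(1) unfolding bigO_P_def by blast
  have "measure_pmf.prob (P k) {\<omega>. \<bar>X' k \<omega>\<bar> > M * r' k} < \<epsilon>" if "k \<ge> k0" for k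
  proof -
    have "M * r k \<le> M * r' k" using M r by (intro mult_left_mono) auto
    then have "{\<omega>. \<bar>X' k \<omega>\<bar> > M * r' k} \<subseteq> {\<omega>. \<bar>X k \<omega>\<bar> > M * r k}"
      using X[of k] by (auto intro: order.strict_trans1 order.strict_trans2)
    then have "measure_pmf.prob (P k) {\<omega>. \<bar>X' k \<omega>\<bar> > M * r' k}
        \<le> measure_pmf.prob (P k) {\<omega>. \<bar>X k \<omega>\<bar> > M * r k}"
      by (rule measure_pmf.finite_measure_mono) simp
    then show ?thesis using small[OF that] by simp
  qed
  then show "\<exists>M>0. \<exists>k0. \<forall>k\<ge>k0. measure_pmf.prob (P k) {\<omega>. \<bar>X' k \<omega>\<bar> > M * r' k} < \<epsilon>"
    using M by blast
qed

lemma bigO_P_max_norm_sq_of_frobenius: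
  assumes "bigO_P P (\<lambda>k z. \<Sum>i<a k. \<Sum>j<b k. (A k z i j)^2) r" "\<And>k. 0 \<le> r k"
  shows "bigO_P P (\<lambda>k z. (max_norm (a k) (b k) (A k z))^2) r"
  using assms order.refl by (rule bigO_P_mono) (auto intro: order_trans[OF max_norm_sq_le])

lemma bigO_P_op_norm_sq_of_frobenius:
  assumes "bigO_P P (\<lambda>k z. \<Sum>i<a k. \<Sum>j<b k. (A k z i j)^2) r" "\<And>k. 0 \<le> r k" "\<And>k. r k \<le> r' k"
  shows "bigO_P P (\<lambda>k z. (op_norm (a k) (b k) (A k z))^2) r'"
  using assms by (rule bigO_P_mono) (auto intro: order_trans[OF op_norm_sq_le])

locale complete_randomization =
  fixes n Q :: nat and m :: "nat \<Rightarrow> nat"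
  assumes Q_pos: "1 \<le> Q" and sizes: "(\<Sum>q<Q. m q) = n"
    and group_size_ge_2: "\<And>q. q < Q \<Longrightarrow> 2 \<le> m q"
begin

definition \<Omega> :: "(nat \<Rightarrow> nat) set" where
  "\<Omega> = assignments n Q m"

definition expect :: "((nat \<Rightarrow> nat) \<Rightarrow> real) \<Rightarrow> real" where
  "expect f = (\<Sum>z\<in>\<Omega>. f z) / card \<Omega>"

definition indic :: "(nat \<Rightarrow> nat) \<Rightarrow> nat \<Rightarrow> nat \<Rightarrow> real" where
  "indic z i q = (if z i = q then 1 else 0)"

definition group :: "(nat \<Rightarrow> nat) \<Rightarrow> nat \<Rightarrow> nat set" where
  "group z q = {i. i < n \<and> z i = q}"

definition dlists :: "nat \<Rightarrow> nat list set" where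
  "dlists L = {xs. length xs = L \<and> distinct xs \<and> set xs \<subseteq> {..<n}}"

definition pair_prob :: "nat \<Rightarrow> real" where
  "pair_prob q = falling_fact (m q) 2 / falling_fact n 2"

lemma finite_\<Omega>: "finite \<Omega>"
  unfolding \<Omega>_def by (rule assignments_finite)

lemma \<Omega>_nonempty: "\<Omega> \<noteq> {}"
  unfolding \<Omega>_def using sizes by (rule assignments_nonempty)

lemma card_\<Omega>_pos: "0 < card \<Omega>"
  using finite_\<Omega> \<Omega>_nonempty by (simp add: card_gt_0_iff)

lemma expect_eq_pmf_expectation: "measure_pmf.expectation (complete_rand n Q m) f = expect f"
  unfolding complete_rand_def expect_def \<Omega>_def[symmetric]
  using integral_pmf_of_set[OF \<Omega>_nonempty finite_\<Omega>] by simp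

lemma card_group: "z \<in> \<Omega> \<Longrightarrow> q < Q \<Longrightarrow> card (group z q) = m q"
  by (auto simp: \<Omega>_def assignments_def group_def)

lemma finite_group: "finite (group z q)"
  by (auto simp: group_def)

lemma group_size_le: "q < Q \<Longrightarrow> m q \<le> n"
  using sizes member_le_sum[of q "{..<Q}" m] by auto

lemma n_ge_2: "2 \<le> n"
  using group_size_le[of 0] group_size_ge_2[of 0] Q_pos by auto

lemma expect_sum: "expect (\<lambda>z. \<Sum>x\<in>S. f x z) = (\<Sum>x\<in>S. expect (f x))"
  unfolding expect_def by (subst sum.swap) (simp add: sum_divide_distrib)

lemma expect_add: "expect (\<lambda>z. f z + g z) = expect f + expect g"
  unfolding expect_def by (simp add: sum.distrib add_divide_distrib)

lemma expect_diff: "expect (\<lambda>z. f z - g z) = expect f - expect g"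
  unfolding expect_def by (simp add: sum_subtractf diff_divide_distrib)

lemma expect_cmult: "expect (\<lambda>z. c * f z) = c * expect f"
  unfolding expect_def by (simp add: sum_distrib_left)

lemma expect_multc: "expect (\<lambda>z. f z * c) = expect f * c"
  unfolding expect_def by (simp add: sum_distrib_right)

lemma expect_divide: "expect (\<lambda>z. f z / c) = expect f / c"
  using expect_multc[of f "1/c"] by simp

lemma expect_const: "expect (\<lambda>z. c) = c"
  unfolding expect_def using card_\<Omega>_pos by simp

lemma expect_cong: "(\<And>z. z \<in> \<Omega> \<Longrightarrow> f z = g z) \<Longrightarrow> expect f = expect g"
  unfolding expect_def by simp

lemma expect_nonneg: "(\<And>z. z \<in> \<Omega> \<Longrightarrow> 0 \<le> f z) \<Longrightarrow> 0 \<le> expect f"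
  unfolding expect_def by (simp add: sum_nonneg)

lemma finite_dlists: "finite (dlists L)"
  unfolding dlists_def by (rule finite_subset[OF _ finite_lists_length_eq[of "{..<n}" L]]) auto

lemma card_dlists: "real (card (dlists L)) = falling_fact n L"
  unfolding dlists_def falling_fact_def using card_distinct_lists_subset[of "{..<n}" L]
  by (simp add: of_nat_diff)

lemma dlists_length_le: "xs \<in> dlists L \<Longrightarrow> L \<le> n"
  unfolding dlists_def
  by (metis (mono_tags, lifting) card_lessThan card_mono distinct_card finite_lessThan mem_Collect_eq)

lemma expect_map_exchangeable:
  assumes "xs \<in> dlists L" "ys \<in> dlists L"
  shows "expect (\<lambda>z. f (map z xs)) = expect (\<lambda>z. f (map z ys))"
proof -
  obtain p where p: "p permutes {..<n}" "map p ys = xs"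
    using exists_permutes_map_distinct[of xs ys "{..<n}"] assms by (auto simp: dlists_def)
  have "(\<Sum>z\<in>\<Omega>. f (map z xs)) = (\<Sum>z\<in>\<Omega>. f (map (z \<circ> p) ys))"
    by (simp flip: p(2))
  also have "\<dots> = (\<Sum>z\<in>\<Omega>. f (map z ys))"
    unfolding \<Omega>_def by (rule sum_assignments_comp_permutes[OF p(1)])
  finally show ?thesis unfolding expect_def by simp
qed

lemma expect_map_dlist_eq_average:
  assumes xs: "xs \<in> dlists L"
  shows "expect (\<lambda>z. f (map z xs)) = expect (\<lambda>z. \<Sum>ys\<in>dlists L. f (map z ys)) / falling_fact n L"
proof -
  have "expect (\<lambda>z. \<Sum>ys\<in>dlists L. f (map z ys)) = (\<Sum>ys\<in>dlists L. expect (\<lambda>z. f (map z xs)))"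
    unfolding expect_sum using expect_map_exchangeable[OF xs] by (intro sum.cong) auto
  also have "\<dots> = card (dlists L) * expect (\<lambda>z. f (map z xs))"
    by simp
  finally have "expect (\<lambda>z. \<Sum>ys\<in>dlists L. f (map z ys)) = card (dlists L) * expect (\<lambda>z. f (map z xs))" .
  then show ?thesis
    using falling_fact_pos[OF dlists_length_le[OF xs]] by (simp add: card_dlists)
qed

lemma card_dlists_in_group:
  assumes z: "z \<in> \<Omega>" and q: "q < Q"
  shows "card {ys \<in> dlists L. map z ys = replicate L q} = (\<Prod>t<L. m q - t)"
proof -
  have "{ys \<in> dlists L. map z ys = replicate L q}
      = {xs. length xs = L \<and> distinct xs \<and> set xs \<subseteq> group z q}"
    unfolding dlists_def group_def using map_eq_replicate_length_iff[of z _ q] by fastforce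
  then show ?thesis
    using card_distinct_lists_subset[OF finite_group[of z q], of L] card_group[OF z q] by simp
qed

lemma card_dlists_in_two_groups:
  assumes z: "z \<in> \<Omega>" and q: "q < Q" and s: "s < Q" and qs: "q \<noteq> s"
  shows "card {ys \<in> dlists 4. map z ys = [q,q,s,s]} = m q * (m q - 1) * (m s * (m s - 1))"
proof -
  let ?D = "\<lambda>H. {xs. length xs = 2 \<and> distinct xs \<and> set xs \<subseteq> H}"
  have cD: "card (?D (group z r)) = m r * (m r - 1)" if "r < Q" for r
    using card_distinct_lists_subset[OF finite_group[of z r], of 2] card_group[OF z that]
    by (simp add: numeral_2_eq_2 lessThan_Suc)
  have eq: "{ys \<in> dlists 4. map z ys = [q,q,s,s]}
      = (\<lambda>(u,v). u @ v) ` (?D (group z q) \<times> ?D (group z s))"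
  proof (intro set_eqI iffI)
    fix ys assume "ys \<in> {ys \<in> dlists 4. map z ys = [q,q,s,s]}"
    then obtain a b c d where ys: "ys = [a,b,c,d]" and "ys \<in> dlists 4" "map z ys = [q,q,s,s]"
      by (auto simp: dlists_def numeral_eq_Suc length_Suc_conv)
    then have "[a,b] \<in> ?D (group z q)" "[c,d] \<in> ?D (group z s)"
      by (auto simp: dlists_def group_def)
    then show "ys \<in> (\<lambda>(u,v). u @ v) ` (?D (group z q) \<times> ?D (group z s))"
      using ys by (intro image_eqI[where x="([a,b],[c,d])"]) simp_all
  next
    fix ys assume "ys \<in> (\<lambda>(u,v). u @ v) ` (?D (group z q) \<times> ?D (group z s))"
    then obtain u v where ys: "ys = u @ v" and u: "u \<in> ?D (group z q)" and v: "v \<in> ?D (group z s)"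
      by auto
    obtain a b where "u = [a,b]" using u by (auto simp: numeral_2_eq_2 length_Suc_conv)
    moreover obtain c d where "v = [c,d]" using v by (auto simp: numeral_2_eq_2 length_Suc_conv)
    ultimately show "ys \<in> {ys \<in> dlists 4. map z ys = [q,q,s,s]}"
      using ys u v qs by (auto simp: dlists_def group_def)
  qed
  have "inj_on (\<lambda>(u,v). u @ v) (?D (group z q) \<times> ?D (group z s))"
    by (rule inj_onI) auto
  then show ?thesis by (simp add: eq card_image card_cartesian_product cD[OF q] cD[OF s])
qed

lemma prob_dlist_in_group:
  assumes xs: "xs \<in> dlists L" and q: "q < Q"
  shows "expect (\<lambda>z. if map z xs = replicate L q then 1 else 0) = falling_fact (m q) L / falling_fact n L"
proof -
  have "expect (\<lambda>z. \<Sum>ys\<in>dlists L. if map z ys = replicate L q then 1 else 0)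
      = expect (\<lambda>z. falling_fact (m q) L)"
  proof (rule expect_cong)
    fix z assume z: "z \<in> \<Omega>"
    have "dlists L \<inter> {ys. map z ys = replicate L q} = {ys \<in> dlists L. map z ys = replicate L q}"
      by auto
    then show "(\<Sum>ys\<in>dlists L. if map z ys = replicate L q then 1 else 0) = falling_fact (m q) L"
      by (simp add: sum.If_cases finite_dlists card_dlists_in_group[OF z q] falling_fact_def)
  qed
  then show ?thesis
    by (simp add: expect_map_dlist_eq_average[OF xs, where f = "\<lambda>ys. if ys = replicate L q then 1 else 0"]
        expect_const)
qed

lemma prob_dlist_in_two_groups:
  assumes xs: "xs \<in> dlists 4" and q: "q < Q" and s: "s < Q" and qs: "q \<noteq> s"
  shows "expect (\<lambda>z. if map z xs = [q,q,s,s] then 1 else 0)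
       = falling_fact (m q) 2 * falling_fact (m s) 2 / falling_fact n 4"
proof -
  have "expect (\<lambda>z. \<Sum>ys\<in>dlists 4. if map z ys = [q,q,s,s] then 1 else 0)
      = expect (\<lambda>z. falling_fact (m q) 2 * falling_fact (m s) 2)"
  proof (rule expect_cong)
    fix z assume z: "z \<in> \<Omega>"
    have "dlists 4 \<inter> {ys. map z ys = [q,q,s,s]} = {ys \<in> dlists 4. map z ys = [q,q,s,s]}" by auto
    then show "(\<Sum>ys\<in>dlists 4. if map z ys = [q,q,s,s] then 1 else 0)
        = falling_fact (m q) 2 * falling_fact (m s) 2"
      by (simp add: sum.If_cases finite_dlists card_dlists_in_two_groups[OF z q s qs]
          falling_fact_def numeral_2_eq_2 lessThan_Suc)
  qed
  then show ?thesis
    by (simp add: expect_map_dlist_eq_average[OF xs, where f = "\<lambda>ys. if ys = [q,q,s,s] then 1 else 0"]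
        expect_const)
qed

lemma indic_nonneg: "0 \<le> indic z i q"
  by (simp add: indic_def)

lemma expect_indic_pair:
  assumes "i < n" "j < n" "i \<noteq> j" "q < Q"
  shows "expect (\<lambda>z. indic z i q * indic z j q) = pair_prob q"
proof -
  have "[i,j] \<in> dlists 2" using assms by (auto simp: dlists_def)
  moreover have "expect (\<lambda>z. indic z i q * indic z j q)
      = expect (\<lambda>z. if map z [i,j] = replicate 2 q then 1 else 0)"
    by (intro expect_cong) (simp add: indic_def numeral_2_eq_2)
  ultimately show ?thesis using prob_dlist_in_group[of "[i,j]" 2 q] assms(4) by (simp add: pair_prob_def)
qed

lemma expect_indic_triple:
  assumes "x < n" "y < n" "w < n" "x \<noteq> y" "x \<noteq> w" "y \<noteq> w" "q < Q"
  shows "expect (\<lambda>z. indic z x q * indic z y q * indic z w q) = falling_fact (m q) 3 / falling_fact n 3"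
proof -
  have "[x,y,w] \<in> dlists 3" using assms by (auto simp: dlists_def)
  moreover have "expect (\<lambda>z. indic z x q * indic z y q * indic z w q)
      = expect (\<lambda>z. if map z [x,y,w] = replicate 3 q then 1 else 0)"
    by (intro expect_cong) (simp add: indic_def numeral_3_eq_3)
  ultimately show ?thesis using prob_dlist_in_group[of "[x,y,w]" 3 q] assms(7) by simp
qed

lemma expect_indic_quad_same:
  assumes "i < n" "j < n" "k < n" "l < n" "distinct [i,j,k,l]" "q < Q"
  shows "expect (\<lambda>z. indic z i q * indic z j q * indic z k q * indic z l q)
       = falling_fact (m q) 4 / falling_fact n 4"
proof -
  have "[i,j,k,l] \<in> dlists 4" using assms by (auto simp: dlists_def)
  moreover have "expect (\<lambda>z. indic z i q * indic z j q * indic z k q * indic z l q)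
      = expect (\<lambda>z. if map z [i,j,k,l] = replicate 4 q then 1 else 0)"
    by (intro expect_cong) (simp add: indic_def numeral_eq_Suc)
  ultimately show ?thesis using prob_dlist_in_group[of "[i,j,k,l]" 4 q] assms(6) by simp
qed

lemma expect_indic_quad_two:
  assumes "i < n" "j < n" "k < n" "l < n" "distinct [i,j,k,l]" "q < Q" "s < Q" "q \<noteq> s"
  shows "expect (\<lambda>z. indic z i q * indic z j q * indic z k s * indic z l s)
       = falling_fact (m q) 2 * falling_fact (m s) 2 / falling_fact n 4"
proof -
  have "[i,j,k,l] \<in> dlists 4" using assms by (auto simp: dlists_def)
  moreover have "expect (\<lambda>z. indic z i q * indic z j q * indic z k s * indic z l s)
      = expect (\<lambda>z. if map z [i,j,k,l] = [q,q,s,s] then 1 else 0)"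
    by (intro expect_cong) (simp add: indic_def)
  ultimately show ?thesis using prob_dlist_in_two_groups[of "[i,j,k,l]" q s] assms(6-8) by simp
qed

lemma pair_prob_nonneg: "0 \<le> pair_prob q"
  by (simp add: pair_prob_def falling_fact_nonneg)

lemma falling_fact_n_2: "falling_fact n 2 = real n * (real n - 1)"
  using n_ge_2 by (simp add: falling_fact_2)

lemma pair_prob_eq: "q < Q \<Longrightarrow> pair_prob q = real (m q) * (real (m q) - 1) / (real n * (real n - 1))"
  using group_size_ge_2[of q] by (simp add: pair_prob_def falling_fact_2 falling_fact_n_2)

lemma quad_prob_two_groups_dev:
  assumes n4: "4 \<le> n" and q: "q < Q" and s: "s < Q"
  shows "\<bar>falling_fact (m q) 2 * falling_fact (m s) 2 / falling_fact n 4 - pair_prob q * pair_prob s\<bar>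
       \<le> 32 * pair_prob q * pair_prob s / n"
proof -
  define N P where "N = real n" and "P = pair_prob q * pair_prob s"
  define b where "b = N*(N-1)/((N-2)*(N-3))"
  have N4: "4 \<le> N" using n4 by (simp add: N_def)
  have P: "0 \<le> P" by (simp add: P_def pair_prob_nonneg)
  have b: "0 \<le> b - 1" "b - 1 \<le> 32 / N"
    using falling_ratio_bounds[OF N4] by (auto simp: b_def)
  have "falling_fact (m q) 2 * falling_fact (m s) 2 / falling_fact n 4 = P * b"
  proof -
    have "\<And>A B F D :: real. F \<noteq> 0 \<Longrightarrow> D \<noteq> 0 \<Longrightarrow> A * B / (F * D) = (A / F) * (B / F) * (F / D)"
      by (simp add: field_simps)
    then show ?thesis
      unfolding P_def pair_prob_def falling_fact_4[OF n_ge_2] falling_fact_n_2 b_def N_def[symmetric]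
      using N4 by simp
  qed
  moreover have "P * b - P = P * (b - 1)" by (simp add: algebra_simps)
  moreover have "0 \<le> P * (b - 1)" using P b by simp
  moreover have "P * (b - 1) \<le> P * (32 / N)" using P b by (intro mult_left_mono)
  ultimately have "\<bar>falling_fact (m q) 2 * falling_fact (m s) 2 / falling_fact n 4 - P\<bar> \<le> 32 * P / N"
    by (simp add: mult.commute)
  then show ?thesis by (simp add: P_def N_def mult.assoc)
qed

lemma quad_prob_same_group_dev:
  assumes n4: "4 \<le> n" and q: "q < Q"
  shows "\<bar>falling_fact (m q) 4 / falling_fact n 4 - pair_prob q * pair_prob q\<bar>
       \<le> 32 * pair_prob q * pair_prob q * (1 / n + 1 / m q)"
proof -
  define N a P where "N = real n" and "a = real (m q)" and "P = pair_prob q * pair_prob q"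
  define b where "b = N*(N-1)/((N-2)*(N-3))"
  define u where "u = (a - 2) * (a - 3) / (a * (a - 1))"
  have N4: "4 \<le> N" using n4 by (simp add: N_def)
  have m2: "2 \<le> m q" using group_size_ge_2 q by simp
  then have a2: "2 \<le> a" by (simp add: a_def)
  have P: "0 \<le> P" by (simp add: P_def pair_prob_nonneg)
  have fm: "falling_fact (m q) 2 = a * (a - 1)" using m2 by (simp add: falling_fact_2 a_def)
  have "falling_fact (m q) 4 / falling_fact n 4 = P * (u * b)"
  proof -
    have "\<And>M R F D :: real. F \<noteq> 0 \<Longrightarrow> D \<noteq> 0 \<Longrightarrow> M \<noteq> 0 \<Longrightarrow>
        M * R / (F * D) = (M / F) * (M / F) * ((R / M) * (F / D))"
      by (simp add: field_simps)
    then show ?thesis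
      unfolding P_def pair_prob_def falling_fact_4[OF n_ge_2] falling_fact_4[OF m2] falling_fact_n_2 fm
        b_def u_def N_def[symmetric] a_def[symmetric]
      using N4 a2 by (simp add: mult.assoc)
  qed
  moreover have "\<bar>u * b - 1\<bar> \<le> 32 * (1 / N + 1 / a)"
  proof (rule product_near_one_abs_le)
    have "0 \<le> (a - 2) * (a - 3)"
      using m2 by (cases "m q = 2") (auto simp: a_def of_nat_diff)
    then show "0 \<le> u" using a2 by (simp add: u_def)
    show "u \<le> 1" using a2 by (simp add: u_def field_simps)
    have "1 - u = (4 * a - 6) / (a * (a - 1))" using a2 by (simp add: u_def field_simps)
    also have "\<dots> \<le> 4 * (a - 1) / (a * (a - 1))" using a2 by (intro divide_right_mono) auto
    also have "\<dots> = 4 / a" using a2 by (simp add: field_simps)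
    finally show "1 - u \<le> 4 / a" .
  qed (use falling_ratio_bounds[OF N4] a2 N4 in \<open>auto simp: b_def\<close>)
  then have "P * \<bar>u * b - 1\<bar> \<le> P * (32 * (1 / N + 1 / a))" using P by (rule mult_left_mono)
  moreover have "P * (u * b) - P = P * (u * b - 1)" by (simp add: algebra_simps)
  ultimately show ?thesis using P unfolding P_def N_def a_def by (simp add: abs_mult mult_ac)
qed

definition indic_cov :: "nat \<Rightarrow> nat \<Rightarrow> nat \<Rightarrow> nat \<Rightarrow> nat \<Rightarrow> nat \<Rightarrow> real" where
  "indic_cov q s i j k l =
     expect (\<lambda>z. (indic z i q * indic z j q - pair_prob q) * (indic z k s * indic z l s - pair_prob s))"

lemma indic_cov_eq:
  assumes "i < n" "j < n" "k < n" "l < n" "i \<noteq> j" "k \<noteq> l" "q < Q" "s < Q"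
  shows "indic_cov q s i j k l
       = expect (\<lambda>z. indic z i q * indic z j q * indic z k s * indic z l s) - pair_prob q * pair_prob s"
proof -
  have "indic_cov q s i j k l = expect (\<lambda>z. indic z i q * indic z j q * indic z k s * indic z l s
       - pair_prob s * (indic z i q * indic z j q) - pair_prob q * (indic z k s * indic z l s)
       + pair_prob q * pair_prob s)"
    unfolding indic_cov_def by (intro expect_cong) (simp add: algebra_simps)
  then show ?thesis
    using expect_indic_pair[OF assms(1,2,5,7)] expect_indic_pair[OF assms(3,4,6,8)]
    by (simp add: expect_add expect_diff expect_cmult expect_const)
qed

definition quad_err :: "nat \<Rightarrow> nat \<Rightarrow> real" where
  "quad_err q s = 32 * pair_prob q * pair_prob s * (1 / real n + (if q = s then 1 / real (m q) else 0))"

text \<open>The three summands bound the covariance of the pair indicators of \<open>(i, j)\<close> and \<open>(k, l)\<close>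
  for four distinct units, for pairs sharing a unit, and for identical pairs.\<close>

definition indic_cov_bound :: "nat \<Rightarrow> nat \<Rightarrow> nat \<Rightarrow> nat \<Rightarrow> nat \<Rightarrow> nat \<Rightarrow> real" where
  "indic_cov_bound q s i j k l = quad_err q s
     + (kron i k + kron i l + kron j k + kron j l)
         * (pair_prob q * pair_prob s + (if q = s then (real (m q) / real n) ^ 3 else 0))
     + (if q = s then (kron i k * kron j l + kron i l * kron j k) * pair_prob q else 0)"

lemma quad_err_nonneg: "0 \<le> quad_err q s"
  by (simp add: quad_err_def pair_prob_nonneg)

lemma indic_cov_abs_le_distinct:
  assumes "i < n" "j < n" "k < n" "l < n" "distinct [i,j,k,l]" "q < Q" "s < Q"
  shows "\<bar>indic_cov q s i j k l\<bar> \<le> quad_err q s"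
proof -
  have n4: "4 \<le> n"
    using dlists_length_le[of "[i,j,k,l]" 4] assms by (auto simp: dlists_def)
  have cov: "indic_cov q s i j k l
      = expect (\<lambda>z. indic z i q * indic z j q * indic z k s * indic z l s) - pair_prob q * pair_prob s"
    using assms by (intro indic_cov_eq) auto
  show ?thesis
  proof (cases "q = s")
    case True
    then show ?thesis using cov expect_indic_quad_same[OF assms(1-6)] quad_prob_same_group_dev[OF n4 assms(6)]
      by (simp add: quad_err_def)
  next
    case False
    then show ?thesis using cov expect_indic_quad_two[OF assms(1-7) False] quad_prob_two_groups_dev[OF n4 assms(6,7)]
      by (simp add: quad_err_def)
  qed
qed

lemma expect_indic_quad_overlap_le:
  assumes "i < n" "j < n" "k < n" "l < n" "i \<noteq> j" "k \<noteq> l" "q < Q"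
    and "\<not> distinct [i,j,k,l]" "\<not> (i = k \<and> j = l)" "\<not> (i = l \<and> j = k)"
  shows "expect (\<lambda>z. indic z i q * indic z j q * indic z k q * indic z l q) \<le> (real (m q) / real n) ^ 3"
proof -
  obtain x y w where xyw: "x < n" "y < n" "w < n" "x \<noteq> y" "x \<noteq> w" "y \<noteq> w"
    and eq: "\<And>z. indic z i q * indic z j q * indic z k q * indic z l q
                = indic z x q * indic z y q * indic z w q"
  proof -
    have "i = k \<or> i = l \<or> j = k \<or> j = l" using assms(5,6,8) by auto
    then show ?thesis
    proof (elim disjE)
      assume "i = k" then show ?thesis using assms by (intro that[of i j l]) (auto simp: indic_def)
    next
      assume "i = l" then show ?thesis using assms by (intro that[of i j k]) (auto simp: indic_def)
    next
      assume "j = k" then show ?thesis using assms by (intro that[of i j l]) (auto simp: indic_def)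
    next
      assume "j = l" then show ?thesis using assms by (intro that[of i j k]) (auto simp: indic_def)
    qed
  qed
  have n3: "3 \<le> n" using dlists_length_le[of "[x,y,w]" 3] xyw by (auto simp: dlists_def)
  have "expect (\<lambda>z. indic z i q * indic z j q * indic z k q * indic z l q)
      = falling_fact (m q) 3 / falling_fact n 3"
    unfolding eq using expect_indic_triple[OF xyw assms(7)] .
  also have "\<dots> \<le> (real (m q) / real n) ^ 3"
    by (rule falling_fact_ratio_le[OF group_size_le[OF assms(7)] n3])
  finally show ?thesis .
qed

lemma indic_cov_abs_le_overlapping:
  assumes "i < n" "j < n" "k < n" "l < n" "i \<noteq> j" "k \<noteq> l" "q < Q" "s < Q"
    and overlap: "\<not> distinct [i,j,k,l]"
  shows "\<bar>indic_cov q s i j k l\<bar>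
       \<le> (kron i k + kron i l + kron j k + kron j l)
           * (pair_prob q * pair_prob s + (if q = s then (real (m q) / real n) ^ 3 else 0))
         + (if q = s then (kron i k * kron j l + kron i l * kron j k) * pair_prob q else 0)"
proof -
  let ?E4 = "expect (\<lambda>z. indic z i q * indic z j q * indic z k s * indic z l s)"
  let ?ov = "kron i k + kron i l + kron j k + kron j l"
  let ?tw = "kron i k * kron j l + kron i l * kron j k"
  let ?cube = "(real (m q) / real n) ^ 3"
  have pp: "0 \<le> pair_prob q * pair_prob s" by (simp add: pair_prob_nonneg)
  have shared: "i = k \<or> i = l \<or> j = k \<or> j = l" using assms(5,6,9) by auto
  then have ov: "1 \<le> ?ov" by (auto simp: kron_def)
  have "0 \<le> ?E4" by (intro expect_nonneg) (simp add: indic_nonneg)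
  then have abs_le: "\<bar>indic_cov q s i j k l\<bar> \<le> ?E4 + pair_prob q * pair_prob s"
    using indic_cov_eq[OF assms(1-8)] pp by (simp add: abs_le_iff)
  have ppov: "pair_prob q * pair_prob s \<le> ?ov * (pair_prob q * pair_prob s)"
    using ov pp by (simp add: mult_le_cancel_right1)
  show ?thesis
  proof (cases "q = s")
    case False
    have "?E4 = expect (\<lambda>z. 0)"
      using shared False by (intro expect_cong) (auto simp: indic_def)
    then show ?thesis using abs_le ppov False by (simp add: expect_const)
  next
    case qs: True
    show ?thesis
    proof (cases "(i = k \<and> j = l) \<or> (i = l \<and> j = k)")
      case True
      have "?E4 = expect (\<lambda>z. indic z i q * indic z j q)"
        using True qs by (intro expect_cong) (auto simp: indic_def)
      then have "?E4 = pair_prob q" using expect_indic_pair[OF assms(1,2,5,7)] by simp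
      moreover have "1 \<le> ?tw" using True by (auto simp: kron_def)
      then have "pair_prob q \<le> ?tw * pair_prob q"
        using pair_prob_nonneg[of q] by (simp add: mult_le_cancel_right1)
      moreover have "?ov * (pair_prob q * pair_prob s) \<le> ?ov * (pair_prob q * pair_prob s + ?cube)"
        using ov by (intro mult_left_mono) auto
      ultimately show ?thesis using abs_le ppov qs by simp
    next
      case False
      have "?E4 \<le> ?cube"
        using expect_indic_quad_overlap_le[OF assms(1-7) overlap] False qs by auto
      moreover have "?cube \<le> ?ov * ?cube"
        using mult_right_mono[OF ov, of ?cube] by simp
      moreover have "0 \<le> ?tw * pair_prob q" by (simp add: kron_nonneg pair_prob_nonneg)
      ultimately show ?thesis using abs_le ppov qs by (simp add: algebra_simps)
    qed
  qed
qed

lemma indic_cov_abs_le: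
  assumes "i < n" "j < n" "k < n" "l < n" "i \<noteq> j" "k \<noteq> l" "q < Q" "s < Q"
  shows "\<bar>indic_cov q s i j k l\<bar> \<le> indic_cov_bound q s i j k l"
proof (cases "distinct [i,j,k,l]")
  case True
  have "0 \<le> (kron i k + kron i l + kron j k + kron j l)
      * (pair_prob q * pair_prob s + (if q = s then (real (m q) / real n) ^ 3 else 0))"
    "0 \<le> (if q = s then (kron i k * kron j l + kron i l * kron j k) * pair_prob q else 0)"
    by (simp_all add: kron_nonneg pair_prob_nonneg)
  then show ?thesis
    using indic_cov_abs_le_distinct[OF assms(1-4) True assms(7,8)]
    unfolding indic_cov_bound_def by linarith
next
  case False
  then show ?thesis
    using indic_cov_abs_le_overlapping[OF assms False] quad_err_nonneg[of q s]
    unfolding indic_cov_bound_def by linarith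
qed

end

locale randomized_experiment = complete_randomization +
  fixes Y :: "nat \<Rightarrow> nat \<Rightarrow> real"
begin

definition resid :: "nat \<Rightarrow> nat \<Rightarrow> real" where
  "resid q i = Y i q - Ybar n Y q"

definition kern :: "nat \<Rightarrow> nat \<Rightarrow> nat \<Rightarrow> real" where
  "kern q i j = (resid q i - resid q j)^2 / 2"

lemma kern_nonneg: "0 \<le> kern q i j"
  by (simp add: kern_def)

lemma kern_sym: "kern q i j = kern q j i"
  by (simp add: kern_def power2_commute)

lemma kern_diag: "kern q i i = 0"
  by (simp add: kern_def)

lemma kern_le: "kern q i j \<le> (resid q i)^2 + (resid q j)^2"
proof -
  have "0 \<le> (resid q i + resid q j)^2" by simp
  then have "(resid q i - resid q j)^2 \<le> 2 * ((resid q i)^2 + (resid q j)^2)"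
    by (simp add: power2_diff power2_sum algebra_simps)
  then show ?thesis by (simp add: kern_def)
qed

lemma sum_resid: "(\<Sum>i<n. resid q i) = 0"
  using n_ge_2 by (simp add: resid_def Ybar_def sum_subtractf)

lemma sum_kern: "(\<Sum>i<n. \<Sum>j<n. kern q i j) = n * (\<Sum>i<n. (resid q i)^2)"
  using sum_sum_half_sq_diff[of "{..<n}" "resid q"] sum_resid[of q] by (simp add: kern_def)

lemma Spop_eq_resid_sum: "Spop n Y q q' = (\<Sum>i<n. resid q i * resid q' i) / (real n - 1)"
  by (simp add: Spop_def resid_def)

lemma Spop_diag_eq_pair_prob_sum:
  assumes q: "q < Q"
  shows "Spop n Y q q = (\<Sum>i<n. \<Sum>j<n. pair_prob q * kern q i j) / (real (m q) * (real (m q) - 1))"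
proof -
  have m2: "2 \<le> m q" using group_size_ge_2 q by simp
  have "Spop n Y q q = (\<Sum>i<n. \<Sum>j<n. kern q i j) / (real n * (real n - 1))"
    using n_ge_2 by (simp add: Spop_eq_resid_sum sum_kern power2_eq_square)
  also have "\<dots> = pair_prob q * (\<Sum>i<n. \<Sum>j<n. kern q i j) / (real (m q) * (real (m q) - 1))"
    using m2 by (simp add: pair_prob_eq[OF q])
  finally show ?thesis by (simp add: sum_distrib_left)
qed

lemma Shat_eq_kern_sum:
  assumes z: "z \<in> \<Omega>" and q: "q < Q"
  shows "Shat n m Y z q
       = (\<Sum>i<n. \<Sum>j<n. indic z i q * indic z j q * kern q i j) / (real (m q) * (real (m q) - 1))"
proof -
  let ?G = "group z q"
  have cG: "card ?G = m q" by (rule card_group[OF z q])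
  have m2: "2 \<le> m q" using group_size_ge_2 q by simp
  have Yhat: "Yhat n m Y z q = (\<Sum>j\<in>?G. Y j q) / card ?G"
    unfolding Yhat_def cG[symmetric] group_def by (intro arg_cong2[where f="(/)"] sum.cong) auto
  have "Shat n m Y z q = (\<Sum>i\<in>?G. (Y i q - Yhat n m Y z q)^2) / (real (m q) - 1)"
    unfolding Shat_def group_def by (intro arg_cong2[where f="(/)"] sum.cong) auto
  also have "\<dots> = ((\<Sum>i\<in>?G. (Y i q)^2) - (\<Sum>i\<in>?G. Y i q)^2 / card ?G) / (real (m q) - 1)"
    using sum_sq_deviation_from_mean[of ?G "\<lambda>i. Y i q"] finite_group cG m2 by (simp add: Yhat)
  also have "\<dots> = (card ?G * (\<Sum>i\<in>?G. (Y i q)^2) - (\<Sum>i\<in>?G. Y i q)^2)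
      / (real (m q) * (real (m q) - 1))"
    using cG m2 by (simp add: field_simps)
  also have "card ?G * (\<Sum>i\<in>?G. (Y i q)^2) - (\<Sum>i\<in>?G. Y i q)^2 = (\<Sum>i\<in>?G. \<Sum>j\<in>?G. kern q i j)"
    using sum_sum_half_sq_diff[OF finite_group[of z q], of "\<lambda>i. Y i q"] by (simp add: kern_def resid_def)
  also have "\<dots> = (\<Sum>i<n. indic z i q * (\<Sum>j<n. indic z j q * kern q i j))"
    unfolding indic_def group_def sum_indicator_mult_eq_sum_filter ..
  finally show ?thesis by (simp add: sum_distrib_left mult.assoc)
qed

lemma expect_Shat:
  assumes q: "q < Q"
  shows "expect (\<lambda>z. Shat n m Y z q) = Spop n Y q q"
proof -
  have "expect (\<lambda>z. Shat n m Y z q) = expect (\<lambda>z.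
      (\<Sum>i<n. \<Sum>j<n. indic z i q * indic z j q * kern q i j) / (real (m q) * (real (m q) - 1)))"
    by (intro expect_cong Shat_eq_kern_sum q)
  also have "\<dots> = (\<Sum>i<n. \<Sum>j<n. expect (\<lambda>z. indic z i q * indic z j q) * kern q i j)
        / (real (m q) * (real (m q) - 1))"
    by (simp add: expect_divide expect_sum expect_multc)
  also have "\<dots> = (\<Sum>i<n. \<Sum>j<n. pair_prob q * kern q i j) / (real (m q) * (real (m q) - 1))"
  proof (intro arg_cong2[where f="(/)"] sum.cong refl)
    fix i j assume "i \<in> {..<n}" "j \<in> {..<n}"
    then show "expect (\<lambda>z. indic z i q * indic z j q) * kern q i j = pair_prob q * kern q i j"
      using expect_indic_pair[of i j q] q by (cases "i = j") (auto simp: kern_diag)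
  qed
  finally show ?thesis by (simp add: Spop_diag_eq_pair_prob_sum[OF q])
qed

definition kern_dev :: "(nat \<Rightarrow> nat) \<Rightarrow> nat \<Rightarrow> real" where
  "kern_dev z q = (\<Sum>i<n. \<Sum>j<n. (indic z i q * indic z j q - pair_prob q) * kern q i j)"

definition overlap :: "nat \<Rightarrow> nat \<Rightarrow> real" where
  "overlap q s = (\<Sum>a<n. \<Sum>b<n. \<Sum>c<n. kern q a b * kern s a c)"

lemma sum_kern_prod:
  "(\<Sum>i<n. \<Sum>j<n. \<Sum>k<n. \<Sum>l<n. kern q i j * kern s k l)
   = (\<Sum>i<n. \<Sum>j<n. kern q i j) * (\<Sum>k<n. \<Sum>l<n. kern s k l)"
  by (simp only: sum_distrib_right) (simp only: sum_distrib_left)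

lemma sum_kern_prod_kron_ik:
  "(\<Sum>i<n. \<Sum>j<n. \<Sum>k<n. \<Sum>l<n. kern q i j * kern s k l * kron i k) = overlap q s"
  unfolding overlap_def by (simp add: sum_sum_mult_kron)

lemma sum_kern_prod_kron_il:
  "(\<Sum>i<n. \<Sum>j<n. \<Sum>k<n. \<Sum>l<n. kern q i j * kern s k l * kron i l) = overlap q s"
  unfolding overlap_def by (intro sum.cong refl) (simp add: sum_mult_kron kern_sym[of s])

lemma sum_kern_prod_kron_jk:
  "(\<Sum>i<n. \<Sum>j<n. \<Sum>k<n. \<Sum>l<n. kern q i j * kern s k l * kron j k) = overlap q s"
proof -
  have "(\<Sum>i<n. \<Sum>j<n. \<Sum>k<n. \<Sum>l<n. kern q i j * kern s k l * kron j k)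
      = (\<Sum>i<n. \<Sum>j<n. \<Sum>l<n. kern q i j * kern s j l)"
    by (simp add: sum_sum_mult_kron)
  also have "\<dots> = overlap q s"
    unfolding overlap_def by (subst sum.swap) (simp add: kern_sym[of q])
  finally show ?thesis .
qed

lemma sum_kern_prod_kron_jl:
  "(\<Sum>i<n. \<Sum>j<n. \<Sum>k<n. \<Sum>l<n. kern q i j * kern s k l * kron j l) = overlap q s"
proof -
  have "(\<Sum>i<n. \<Sum>j<n. \<Sum>k<n. \<Sum>l<n. kern q i j * kern s k l * kron j l)
      = (\<Sum>i<n. \<Sum>j<n. \<Sum>k<n. kern q i j * kern s k j)"
    by (intro sum.cong refl) (simp add: sum_mult_kron)
  also have "\<dots> = overlap q s"
    unfolding overlap_def by (subst sum.swap) (simp add: kern_sym[of q] kern_sym[of s])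
  finally show ?thesis .
qed

lemma sum_kern_prod_kron_ik_jl:
  "(\<Sum>i<n. \<Sum>j<n. \<Sum>k<n. \<Sum>l<n. kern q i j * kern q k l * (kron i k * kron j l))
   = (\<Sum>i<n. \<Sum>j<n. (kern q i j)^2)"
proof (intro sum.cong refl)
  fix i j assume "i \<in> {..<n}" "j \<in> {..<n}"
  then show "(\<Sum>k<n. \<Sum>l<n. kern q i j * kern q k l * (kron i k * kron j l)) = (kern q i j)^2"
    by (simp add: sum_mult_kron power2_eq_square flip: mult.assoc)
qed

lemma sum_kern_prod_kron_il_jk:
  "(\<Sum>i<n. \<Sum>j<n. \<Sum>k<n. \<Sum>l<n. kern q i j * kern q k l * (kron i l * kron j k))
   = (\<Sum>i<n. \<Sum>j<n. (kern q i j)^2)"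
proof (intro sum.cong refl)
  fix i j assume i: "i \<in> {..<n}" and j: "j \<in> {..<n}"
  have "(\<Sum>k<n. \<Sum>l<n. kern q i j * kern q k l * (kron i l * kron j k))
      = (\<Sum>k<n. \<Sum>l<n. (kern q i j * kern q k l * kron j k) * kron i l)"
    by (simp add: mult_ac)
  also have "\<dots> = (kern q i j)^2"
    using i j by (simp add: sum_mult_kron power2_eq_square kern_sym[of q j i])
  finally show "(\<Sum>k<n. \<Sum>l<n. kern q i j * kern q k l * (kron i l * kron j k)) = (kern q i j)^2" .
qed

lemma expect_kern_dev_prod:
  "expect (\<lambda>z. kern_dev z q * kern_dev z s)
   = (\<Sum>i<n. \<Sum>j<n. \<Sum>k<n. \<Sum>l<n. indic_cov q s i j k l * (kern q i j * kern s k l))"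
proof -
  have "kern_dev z q * kern_dev z s = (\<Sum>i<n. \<Sum>j<n. \<Sum>k<n. \<Sum>l<n.
      ((indic z i q * indic z j q - pair_prob q) * (indic z k s * indic z l s - pair_prob s))
      * (kern q i j * kern s k l))" for z
    unfolding kern_dev_def
    by (simp only: sum_distrib_right, simp only: sum_distrib_left) (intro sum.cong refl, simp only: mult_ac)
  then show ?thesis by (simp add: expect_sum expect_multc indic_cov_def)
qed

lemma sum_kern_prod_indic_cov_bound:
  "(\<Sum>i<n. \<Sum>j<n. \<Sum>k<n. \<Sum>l<n. kern q i j * kern s k l * indic_cov_bound q s i j k l)
   = quad_err q s * ((\<Sum>i<n. \<Sum>j<n. kern q i j) * (\<Sum>k<n. \<Sum>l<n. kern s k l))
     + (pair_prob q * pair_prob s + (if q = s then (real (m q) / real n) ^ 3 else 0)) * (4 * overlap q s)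
     + (if q = s then pair_prob q else 0) * (2 * (\<Sum>i<n. \<Sum>j<n. (kern q i j)^2))"
  (is "_ = _ + ?K * _ + ?T * _")
proof -
  let ?d = "\<lambda>i j k l. kern q i j * kern s k l"
  have "(\<Sum>i<n. \<Sum>j<n. \<Sum>k<n. \<Sum>l<n. ?d i j k l * indic_cov_bound q s i j k l)
      = (\<Sum>i<n. \<Sum>j<n. \<Sum>k<n. \<Sum>l<n. quad_err q s * ?d i j k l
        + ?K * (?d i j k l * kron i k) + ?K * (?d i j k l * kron i l)
        + ?K * (?d i j k l * kron j k) + ?K * (?d i j k l * kron j l)
        + ?T * (?d i j k l * (kron i k * kron j l)) + ?T * (?d i j k l * (kron i l * kron j k)))"
    by (intro sum.cong refl) (simp add: indic_cov_bound_def algebra_simps)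
  also have "\<dots> = quad_err q s * (\<Sum>i<n. \<Sum>j<n. \<Sum>k<n. \<Sum>l<n. ?d i j k l)
        + ?K * (\<Sum>i<n. \<Sum>j<n. \<Sum>k<n. \<Sum>l<n. ?d i j k l * kron i k)
        + ?K * (\<Sum>i<n. \<Sum>j<n. \<Sum>k<n. \<Sum>l<n. ?d i j k l * kron i l)
        + ?K * (\<Sum>i<n. \<Sum>j<n. \<Sum>k<n. \<Sum>l<n. ?d i j k l * kron j k)
        + ?K * (\<Sum>i<n. \<Sum>j<n. \<Sum>k<n. \<Sum>l<n. ?d i j k l * kron j l)
        + ?T * (\<Sum>i<n. \<Sum>j<n. \<Sum>k<n. \<Sum>l<n. ?d i j k l * (kron i k * kron j l))
        + ?T * (\<Sum>i<n. \<Sum>j<n. \<Sum>k<n. \<Sum>l<n. ?d i j k l * (kron i l * kron j k))"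
    by (simp only: sum.distrib sum_distrib_left[symmetric])
  also have "\<dots> = quad_err q s * ((\<Sum>i<n. \<Sum>j<n. kern q i j) * (\<Sum>k<n. \<Sum>l<n. kern s k l))
        + ?K * (4 * overlap q s) + ?T * (2 * (\<Sum>i<n. \<Sum>j<n. (kern q i j)^2))"
  proof -
    have "?T * (\<Sum>i<n. \<Sum>j<n. \<Sum>k<n. \<Sum>l<n. ?d i j k l * (kron i k * kron j l))
        = ?T * (\<Sum>i<n. \<Sum>j<n. (kern q i j)^2)"
      "?T * (\<Sum>i<n. \<Sum>j<n. \<Sum>k<n. \<Sum>l<n. ?d i j k l * (kron i l * kron j k))
        = ?T * (\<Sum>i<n. \<Sum>j<n. (kern q i j)^2)"
      by (cases "q = s"; simp add: sum_kern_prod_kron_ik_jl sum_kern_prod_kron_il_jk)+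
    then show ?thesis
      by (simp only: sum_kern_prod sum_kern_prod_kron_ik sum_kern_prod_kron_il sum_kern_prod_kron_jk
          sum_kern_prod_kron_jl)
  qed
  finally show ?thesis .
qed

lemma sum_abs_indic_cov_kern_le:
  assumes q: "q < Q" and s: "s < Q"
  shows "(\<Sum>i<n. \<Sum>j<n. \<Sum>k<n. \<Sum>l<n. \<bar>indic_cov q s i j k l * (kern q i j * kern s k l)\<bar>)
       \<le> (\<Sum>i<n. \<Sum>j<n. \<Sum>k<n. \<Sum>l<n. kern q i j * kern s k l * indic_cov_bound q s i j k l)"
proof (intro sum_mono)
  fix i j k l assume "i \<in> {..<n}" "j \<in> {..<n}" "k \<in> {..<n}" "l \<in> {..<n}"
  then have ijkl: "i < n" "j < n" "k < n" "l < n" by auto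
  have dd: "0 \<le> kern q i j * kern s k l" by (simp add: kern_nonneg)
  show "\<bar>indic_cov q s i j k l * (kern q i j * kern s k l)\<bar>
      \<le> kern q i j * kern s k l * indic_cov_bound q s i j k l"
  proof (cases "i = j \<or> k = l")
    case True then show ?thesis by (auto simp: kern_diag)
  next
    case False
    then have "\<bar>indic_cov q s i j k l\<bar> \<le> indic_cov_bound q s i j k l"
      using ijkl q s by (intro indic_cov_abs_le) auto
    then have "\<bar>indic_cov q s i j k l\<bar> * (kern q i j * kern s k l)
        \<le> indic_cov_bound q s i j k l * (kern q i j * kern s k l)"
      using dd by (rule mult_right_mono)
    then show ?thesis using dd by (simp add: abs_mult mult.commute abs_of_nonneg kern_nonneg)
  qed
qed

definition weight :: "(nat \<Rightarrow> real) \<Rightarrow> nat \<Rightarrow> real" where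
  "weight a q = a q / (real (m q) * (real (m q) * (real (m q) - 1)))"

lemma weighted_Shat_dev_eq:
  assumes z: "z \<in> \<Omega>"
  shows "(\<Sum>q<Q. a q * (Shat n m Y z q - Spop n Y q q) / real (m q)) = (\<Sum>q<Q. weight a q * kern_dev z q)"
proof (rule sum.cong[OF refl])
  fix q assume "q \<in> {..<Q}"
  then have q: "q < Q" by simp
  have m2: "2 \<le> m q" using group_size_ge_2 q by simp
  have "Shat n m Y z q - Spop n Y q q
      = ((\<Sum>i<n. \<Sum>j<n. indic z i q * indic z j q * kern q i j) - (\<Sum>i<n. \<Sum>j<n. pair_prob q * kern q i j))
        / (real (m q) * (real (m q) - 1))"
    unfolding Shat_eq_kern_sum[OF z q] Spop_diag_eq_pair_prob_sum[OF q] by (simp add: diff_divide_distrib)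
  also have "\<dots> = kern_dev z q / (real (m q) * (real (m q) - 1))"
    unfolding kern_dev_def by (simp add: sum_subtractf[symmetric] algebra_simps)
  finally have eq: "Shat n m Y z q - Spop n Y q q = kern_dev z q / (real (m q) * (real (m q) - 1))" .
  have "real (m q) \<noteq> 0" "real (m q) - 1 \<noteq> 0" using m2 by auto
  then show "a q * (Shat n m Y z q - Spop n Y q q) / real (m q) = weight a q * kern_dev z q"
    unfolding eq weight_def by (simp add: field_simps)
qed

lemma EVhat_eq: "EVhat n Q m Y F h h' = (\<Sum>q<Q. F q h * (Spop n Y q q / real (m q)) * F q h')"
proof -
  have "EVhat n Q m Y F h h' = expect (\<lambda>z. \<Sum>q<Q. F q h * (Shat n m Y z q / real (m q)) * F q h')"
    unfolding EVhat_def expect_eq_pmf_expectation Vhat_def ..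
  also have "\<dots> = (\<Sum>q<Q. F q h * (expect (\<lambda>z. Shat n m Y z q) / real (m q)) * F q h')"
    by (simp add: expect_sum expect_cmult expect_multc expect_divide)
  finally show ?thesis by (simp add: expect_Shat)
qed

lemma Vgamma_eq:
  "Vgamma n Q m Y F h h' = (\<Sum>q<Q. F q h * (Spop n Y q q / real (m q)) * F q h')
     - (\<Sum>q<Q. \<Sum>q'<Q. F q h * (Spop n Y q q' / real n) * F q' h')"
proof -
  have "Vgamma n Q m Y F h h'
      = (\<Sum>q<Q. (\<Sum>q'<Q. if q = q' then F q h * (Spop n Y q q / real (m q)) * F q h' else 0)
          - (\<Sum>q'<Q. F q h * (Spop n Y q q' / real n) * F q' h'))"
    unfolding Vgamma_def VY_def sum_subtractf[symmetric] by (intro sum.cong refl) (simp add: algebra_simps)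
  then show ?thesis by (simp add: sum_subtractf)
qed

lemma EVhat_minus_Vgamma_eq_gram:
  "EVhat n Q m Y F h h' - Vgamma n Q m Y F h h'
    = (\<Sum>i<n. (1 / (real n * (real n - 1))) * (\<Sum>q<Q. F q h * resid q i) * (\<Sum>q<Q. F q h' * resid q i))"
proof -
  have "EVhat n Q m Y F h h' - Vgamma n Q m Y F h h'
      = (\<Sum>q<Q. \<Sum>q'<Q. F q h * (Spop n Y q q' / real n) * F q' h')"
    unfolding EVhat_eq Vgamma_eq by simp
  also have "\<dots> = (\<Sum>q<Q. \<Sum>q'<Q. \<Sum>i<n.
      (1 / (real n * (real n - 1))) * (F q h * resid q i) * (F q' h' * resid q' i))"
    unfolding Spop_eq_resid_sum
    by (intro sum.cong refl) (simp add: sum_distrib_left sum_divide_distrib mult_ac)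
  also have "\<dots> = (\<Sum>i<n. \<Sum>q<Q. \<Sum>q'<Q.
      (1 / (real n * (real n - 1))) * (F q h * resid q i) * (F q' h' * resid q' i))"
    by (subst sum.swap) (simp add: sum.swap[of _ "{..<Q}" "{..<n}"])
  also have "\<dots> = (\<Sum>i<n. (1 / (real n * (real n - 1))) * (\<Sum>q<Q. F q h * resid q i) * (\<Sum>q<Q. F q h' * resid q i))"
    by (intro sum.cong refl) (simp add: sum_distrib_left sum_distrib_right sum_divide_distrib mult_ac)
  finally show ?thesis .
qed

lemma psd_EVhat_minus_Vgamma: "psd H (\<lambda>h h'. EVhat n Q m Y F h h' - Vgamma n Q m Y F h h')"
  unfolding psd_def EVhat_minus_Vgamma_eq_gram
  using n_ge_2 by (intro allI quadratic_form_gram_nonneg) simp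

lemma Vhat_minus_EVhat_eq:
  "Vhat n Q m Y F z h h' - EVhat n Q m Y F h h'
     = (\<Sum>q<Q. (F q h * F q h') * (Shat n m Y z q - Spop n Y q q) / real (m q))"
  unfolding Vhat_def EVhat_eq by (simp add: sum_subtractf[symmetric] algebra_simps diff_divide_distrib)

text \<open>The constants come from \<open>indic_cov_bound\<close> once the kernel sums are bounded by the fourth
  moment: \<open>n\<^sup>4 quad_err\<close> from four distinct units, \<open>16 n\<^sup>3\<close> from pairs sharing a unit and
  \<open>8 n\<^sup>2\<close> from identical pairs.\<close>

definition kern_dev_var_excess :: "nat \<Rightarrow> real" where
  "kern_dev_var_excess q = 32 * real n ^ 4 * (pair_prob q)^2 / real (m q)
     + 16 * real n ^ 3 * (real (m q) / real n) ^ 3 + 8 * real n ^ 2 * pair_prob q"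

definition kern_dev_cov_bound :: "real \<Rightarrow> nat \<Rightarrow> nat \<Rightarrow> real" where
  "kern_dev_cov_bound D q s = D * (48 * real n ^ 3 * (pair_prob q * pair_prob s))
     + (if q = s then D * kern_dev_var_excess q else 0)"

lemma sum_weight_kern_dev_cov_bound_eq:
  "(\<Sum>q<Q. \<Sum>s<Q. \<bar>w q\<bar> * \<bar>w s\<bar> * kern_dev_cov_bound D q s)
   = D * (48 * real n ^ 3 * (\<Sum>q<Q. \<bar>w q\<bar> * pair_prob q)^2) + D * (\<Sum>q<Q. (w q)^2 * kern_dev_var_excess q)"
proof -
  have "(\<Sum>q<Q. \<Sum>s<Q. \<bar>w q\<bar> * \<bar>w s\<bar> * kern_dev_cov_bound D q s)
      = (\<Sum>q<Q. \<Sum>s<Q. D * (48 * real n ^ 3) * ((\<bar>w q\<bar> * pair_prob q) * (\<bar>w s\<bar> * pair_prob s))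
          + (if q = s then D * ((w q)^2 * kern_dev_var_excess q) else 0))"
    unfolding kern_dev_cov_bound_def by (intro sum.cong refl) (auto simp: algebra_simps power2_eq_square)
  also have "\<dots> = D * (48 * real n ^ 3) * (\<Sum>q<Q. \<Sum>s<Q. (\<bar>w q\<bar> * pair_prob q) * (\<bar>w s\<bar> * pair_prob s))
          + (\<Sum>q<Q. D * ((w q)^2 * kern_dev_var_excess q))"
    by (simp add: sum.distrib sum_distrib_left[symmetric] sum.delta)
  finally show ?thesis
    by (simp add: power2_eq_square sum_product sum_distrib_left[symmetric] mult_ac)
qed

lemma sum_abs_weight_pair_prob_sq_le:
  "48 * real n ^ 3 * (\<Sum>q<Q. \<bar>weight a q\<bar> * pair_prob q)^2
   \<le> 192 * (\<Sum>q<Q. \<bar>a q\<bar> / real (m q))^2 / real n"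
proof -
  have "\<bar>weight a q\<bar> * pair_prob q = (\<bar>a q\<bar> / real (m q)) / (real n * (real n - 1))" if "q < Q" for q
  proof -
    have m2: "2 \<le> m q" using group_size_ge_2 that by simp
    then have "\<bar>weight a q\<bar> = \<bar>a q\<bar> / (real (m q) * (real (m q) * (real (m q) - 1)))"
      unfolding weight_def by (simp add: abs_divide)
    then show ?thesis unfolding pair_prob_eq[OF that] using m2 n_ge_2 by (simp add: field_simps)
  qed
  then have "(\<Sum>q<Q. \<bar>weight a q\<bar> * pair_prob q) = (\<Sum>q<Q. \<bar>a q\<bar> / real (m q)) / (real n * (real n - 1))"
    by (simp add: sum_divide_distrib)
  then show ?thesis
    using cross_term_bound[of "real n" "real n - 1"] n_ge_2 ratio_pred_le_2[of "real n"] by simp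
qed

lemma weight_sq_var_excess_le:
  assumes q: "q < Q"
  shows "(weight a q)^2 * kern_dev_var_excess q \<le> 208 * ((a q)^2 / real (m q) ^ 3)"
proof -
  have m2: "2 \<le> real (m q)" using group_size_ge_2 q by simp
  have n2: "2 \<le> real n" using n_ge_2 by simp
  show ?thesis
    using diag_term_bound[of "real (m q)" "real n" "real n - 1" "real (m q) - 1" "a q"] m2 n2
      ratio_pred_le_2[OF m2] ratio_pred_le_2[OF n2]
    unfolding weight_def kern_dev_var_excess_def pair_prob_eq[OF q] by simp
qed

context
  fixes D :: real
  assumes moment: "\<And>q. q < Q \<Longrightarrow> (\<Sum>i<n. (resid q i)^4) \<le> real n * D"
begin

lemma moment_bound_nonneg: "0 \<le> D"
proof -
  have "0 \<le> (\<Sum>i<n. (resid 0 i)^4)" by (simp add: sum_nonneg)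
  also have "\<dots> \<le> real n * D" using moment[of 0] Q_pos by simp
  finally show ?thesis using n_ge_2 by (simp add: zero_le_mult_iff)
qed

lemma sum_sq_resid_sq_le:
  assumes "q < Q"
  shows "(\<Sum>i<n. (resid q i)^2)^2 \<le> real n ^ 2 * D"
proof -
  have "(\<Sum>i<n. (resid q i)^2)^2 \<le> (\<Sum>i<n. ((resid q i)^2)^2) * card {..<n}"
    by (rule sum_squared_le_sum_of_squares)
  also have "\<dots> = (\<Sum>i<n. (resid q i)^4) * real n"
    by (simp add: power2_eq_square power4_eq_xxxx mult.assoc)
  also have "\<dots> \<le> real n * D * real n" using moment[OF assms] by (simp add: mult_right_mono)
  finally show ?thesis by (simp add: power2_eq_square mult_ac)
qed

lemma sum_sq_resid_prod_le:
  assumes "q < Q" "s < Q"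
  shows "(\<Sum>i<n. (resid q i)^2) * (\<Sum>i<n. (resid s i)^2) \<le> real n ^ 2 * D"
proof -
  let ?A = "\<Sum>i<n. (resid q i)^2" and ?B = "\<Sum>i<n. (resid s i)^2"
  have "0 \<le> (?A - ?B)^2" by simp
  then have "?A * ?B \<le> (?A^2 + ?B^2) / 2" by (simp add: power2_diff algebra_simps)
  also have "\<dots> \<le> (real n ^ 2 * D + real n ^ 2 * D) / 2"
    using sum_sq_resid_sq_le[OF assms(1)] sum_sq_resid_sq_le[OF assms(2)]
    by (intro divide_right_mono add_mono) auto
  finally show ?thesis by (simp add: mult.commute)
qed

lemma sum_sq_resid_cross_le:
  assumes "q < Q" "s < Q"
  shows "(\<Sum>i<n. (resid q i)^2 * (resid s i)^2) \<le> real n * D"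
proof -
  have "(\<Sum>i<n. (resid q i)^2 * (resid s i)^2) \<le> (\<Sum>i<n. ((resid q i)^4 + (resid s i)^4) / 2)"
  proof (rule sum_mono)
    fix i
    have "0 \<le> ((resid q i)^2 - (resid s i)^2)^2" by simp
    then show "(resid q i)^2 * (resid s i)^2 \<le> ((resid q i)^4 + (resid s i)^4) / 2"
      by (simp add: power2_diff algebra_simps power4_eq_xxxx power2_eq_square)
  qed
  also have "\<dots> = ((\<Sum>i<n. (resid q i)^4) + (\<Sum>i<n. (resid s i)^4)) / 2"
    by (simp add: sum.distrib sum_divide_distrib[symmetric])
  also have "\<dots> \<le> (real n * D + real n * D) / 2"
    using moment[OF assms(1)] moment[OF assms(2)] by (intro divide_right_mono add_mono) auto
  finally show ?thesis by (simp add: mult.commute)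
qed

lemma sum_kern_prod_le:
  assumes "q < Q" "s < Q"
  shows "(\<Sum>i<n. \<Sum>j<n. kern q i j) * (\<Sum>k<n. \<Sum>l<n. kern s k l) \<le> real n ^ 4 * D"
proof -
  have "(\<Sum>i<n. \<Sum>j<n. kern q i j) * (\<Sum>k<n. \<Sum>l<n. kern s k l)
      = real n ^ 2 * ((\<Sum>i<n. (resid q i)^2) * (\<Sum>i<n. (resid s i)^2))"
    by (simp add: sum_kern power2_eq_square mult_ac)
  also have "\<dots> \<le> real n ^ 2 * (real n ^ 2 * D)"
    by (intro mult_left_mono sum_sq_resid_prod_le assms) simp
  finally show ?thesis by (simp add: power_add[symmetric] mult.assoc[symmetric] numeral_Bit0)
qed

lemma overlap_le:
  assumes "q < Q" "s < Q"
  shows "overlap q s \<le> 4 * real n ^ 3 * D"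
proof -
  have "overlap q s \<le> real n ^ 2 * (\<Sum>a<n. (resid q a)^2 * (resid s a)^2)
      + 3 * real n * ((\<Sum>a<n. (resid q a)^2) * (\<Sum>a<n. (resid s a)^2))"
    unfolding overlap_def mult.assoc[symmetric]
    by (rule sum3_products_le) (auto simp: kern_nonneg kern_le)
  also have "\<dots> \<le> real n ^ 2 * (real n * D) + 3 * real n * (real n ^ 2 * D)"
    using sum_sq_resid_cross_le[OF assms] sum_sq_resid_prod_le[OF assms]
    by (intro add_mono mult_left_mono) auto
  also have "\<dots> = 4 * real n ^ 3 * D" by (simp add: power2_eq_square power3_eq_cube algebra_simps)
  finally show ?thesis .
qed

lemma sum_kern_sq_le:
  assumes "q < Q"
  shows "(\<Sum>i<n. \<Sum>j<n. (kern q i j)^2) \<le> 4 * real n ^ 2 * D"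
proof -
  let ?x = "\<lambda>a. (resid q a)^2"
  have "(kern q i j)^2 \<le> 2 * (?x i)^2 + 2 * (?x j)^2" for i j
  proof -
    have "(kern q i j)^2 \<le> (?x i + ?x j)^2"
      using kern_le[of q i j] kern_nonneg[of q i j] by (intro power_mono) auto
    moreover have "0 \<le> (?x i - ?x j)^2" by simp
    ultimately show ?thesis by (simp add: power2_diff power2_sum algebra_simps)
  qed
  then have "(\<Sum>i<n. \<Sum>j<n. (kern q i j)^2) \<le> (\<Sum>i<n. \<Sum>j<n. 2 * (?x i)^2 + 2 * (?x j)^2)"
    by (intro sum_mono)
  also have "\<dots> = 4 * real n * (\<Sum>i<n. (resid q i)^4)"
    by (simp add: sum.distrib sum_distrib_left[symmetric] algebra_simps power4_eq_xxxx power2_eq_square)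
  also have "\<dots> \<le> 4 * real n * (real n * D)" using moment[OF assms] by (intro mult_left_mono) auto
  finally show ?thesis by (simp add: power2_eq_square mult_ac)
qed

lemma expect_kern_dev_prod_abs_le:
  assumes q: "q < Q" and s: "s < Q"
  shows "\<bar>expect (\<lambda>z. kern_dev z q * kern_dev z s)\<bar> \<le> kern_dev_cov_bound D q s"
proof -
  have "\<bar>expect (\<lambda>z. kern_dev z q * kern_dev z s)\<bar>
      \<le> (\<Sum>i<n. \<Sum>j<n. \<Sum>k<n. \<Sum>l<n. \<bar>indic_cov q s i j k l * (kern q i j * kern s k l)\<bar>)"
    unfolding expect_kern_dev_prod by (rule order.trans[OF sum_abs sum_mono])+ (rule order.refl)
  also have "\<dots> \<le> (\<Sum>i<n. \<Sum>j<n. \<Sum>k<n. \<Sum>l<n. kern q i j * kern s k l * indic_cov_bound q s i j k l)"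
    by (rule sum_abs_indic_cov_kern_le[OF q s])
  also have "\<dots> \<le> quad_err q s * (real n ^ 4 * D)
      + (pair_prob q * pair_prob s + (if q = s then (real (m q) / real n) ^ 3 else 0)) * (4 * (4 * real n ^ 3 * D))
      + (if q = s then pair_prob q else 0) * (2 * (4 * real n ^ 2 * D))"
    unfolding sum_kern_prod_indic_cov_bound
    using sum_kern_prod_le[OF q s] overlap_le[OF q s] sum_kern_sq_le[OF q] quad_err_nonneg[of q s]
    by (intro add_mono mult_left_mono) (auto simp: pair_prob_nonneg)
  also have "\<dots> = kern_dev_cov_bound D q s"
    unfolding kern_dev_cov_bound_def kern_dev_var_excess_def quad_err_def using n_ge_2
    by (cases "q = s") (simp_all add: algebra_simps power2_eq_square power3_eq_cube power4_eq_xxxx)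
  finally show ?thesis .
qed

lemma expect_weighted_Shat_dev_sq_le:
  "expect (\<lambda>z. (\<Sum>q<Q. a q * (Shat n m Y z q - Spop n Y q q) / real (m q))^2)
     \<le> D * (192 * (\<Sum>q<Q. \<bar>a q\<bar> / real (m q))^2 / real n + 208 * (\<Sum>q<Q. (a q)^2 / real (m q) ^ 3))"
proof -
  have "expect (\<lambda>z. (\<Sum>q<Q. a q * (Shat n m Y z q - Spop n Y q q) / real (m q))^2)
      = (\<Sum>q<Q. \<Sum>s<Q. weight a q * weight a s * expect (\<lambda>z. kern_dev z q * kern_dev z s))"
    unfolding expect_cmult[symmetric] expect_sum[symmetric]
    by (intro expect_cong) (simp add: weighted_Shat_dev_eq power2_eq_square sum_product mult_ac)
  also have "\<dots> \<le> (\<Sum>q<Q. \<Sum>s<Q. \<bar>weight a q\<bar> * \<bar>weight a s\<bar> * kern_dev_cov_bound D q s)"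
  proof (intro sum_mono)
    fix q s assume "q \<in> {..<Q}" "s \<in> {..<Q}"
    then have "\<bar>expect (\<lambda>z. kern_dev z q * kern_dev z s)\<bar> \<le> kern_dev_cov_bound D q s"
      by (intro expect_kern_dev_prod_abs_le) auto
    then have "\<bar>weight a q * weight a s * expect (\<lambda>z. kern_dev z q * kern_dev z s)\<bar>
        \<le> \<bar>weight a q\<bar> * \<bar>weight a s\<bar> * kern_dev_cov_bound D q s"
      by (simp add: abs_mult mult_left_mono)
    then show "weight a q * weight a s * expect (\<lambda>z. kern_dev z q * kern_dev z s)
        \<le> \<bar>weight a q\<bar> * \<bar>weight a s\<bar> * kern_dev_cov_bound D q s"
      by linarith
  qed
  also have "\<dots> \<le> D * (192 * (\<Sum>q<Q. \<bar>a q\<bar> / real (m q))^2 / real n)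
      + D * (208 * (\<Sum>q<Q. (a q)^2 / real (m q) ^ 3))"
    unfolding sum_weight_kern_dev_cov_bound_eq sum_distrib_left
    using moment_bound_nonneg sum_abs_weight_pair_prob_sq_le weight_sq_var_excess_le
    by (intro add_mono mult_left_mono sum_mono) auto
  finally show ?thesis by (simp add: distrib_left)
qed

lemma expect_Vhat_entry_dev_sq_le:
  assumes h: "h < H" "h' < H"
  shows "expect (\<lambda>z. (Vhat n Q m Y F z h h' - EVhat n Q m Y F h h')^2)
       \<le> D * max_norm Q H F ^ 4 * (192 * (\<Sum>q<Q. 1 / real (m q))^2 / real n
          + 208 * (\<Sum>q<Q. 1 / real (m q) ^ 3))"
proof -
  let ?Fm = "max_norm Q H F" and ?a = "\<lambda>q. F q h * F q h'"
  have a_le: "\<bar>?a q\<bar> \<le> ?Fm^2" if "q < Q" for q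
  proof -
    have "\<bar>F q h\<bar> \<le> ?Fm" "\<bar>F q h'\<bar> \<le> ?Fm" using that h by (auto intro: max_norm_entry)
    then have "\<bar>F q h\<bar> * \<bar>F q h'\<bar> \<le> ?Fm * ?Fm" by (intro mult_mono) auto
    then show ?thesis by (simp add: abs_mult power2_eq_square)
  qed
  have "expect (\<lambda>z. (Vhat n Q m Y F z h h' - EVhat n Q m Y F h h')^2)
      \<le> D * (192 * (\<Sum>q<Q. \<bar>?a q\<bar> / real (m q))^2 / real n + 208 * (\<Sum>q<Q. (?a q)^2 / real (m q) ^ 3))"
    unfolding Vhat_minus_EVhat_eq by (rule expect_weighted_Shat_dev_sq_le)
  also have "\<dots> \<le> D * (192 * (\<Sum>q<Q. ?Fm^2 * (1 / real (m q)))^2 / real n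
      + 208 * (\<Sum>q<Q. ?Fm^4 * (1 / real (m q) ^ 3)))"
  proof (intro mult_left_mono moment_bound_nonneg add_mono divide_right_mono mult_left_mono power_mono sum_mono)
    fix q assume "q \<in> {..<Q}"
    then have q: "q < Q" by simp
    show "\<bar>?a q\<bar> / real (m q) \<le> ?Fm^2 * (1 / real (m q))"
      using a_le[OF q] by (simp add: divide_right_mono)
    have "(?a q)^2 \<le> (?Fm^2)^2" using a_le[OF q] by (metis abs_ge_zero power2_abs power_mono)
    then show "(?a q)^2 / real (m q) ^ 3 \<le> ?Fm^4 * (1 / real (m q) ^ 3)"
      by (simp add: divide_right_mono power_mult[symmetric])
  qed (auto intro: sum_nonneg)
  also have "\<dots> = D * ?Fm^4 * (192 * (\<Sum>q<Q. 1 / real (m q))^2 / real n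
      + 208 * (\<Sum>q<Q. 1 / real (m q) ^ 3))"
  proof -
    have "(?Fm^2 * (\<Sum>q<Q. 1 / real (m q)))^2 = ?Fm^4 * (\<Sum>q<Q. 1 / real (m q))^2"
      by (simp add: power_mult_distrib power_mult[symmetric])
    then show ?thesis by (simp only: sum_distrib_left[symmetric]) (simp add: algebra_simps)
  qed
  finally show ?thesis .
qed

lemma expect_frobenius_dev_le:
  "expect (\<lambda>z. \<Sum>h<H. \<Sum>h'<H. (Vhat n Q m Y F z h h' - EVhat n Q m Y F h h')^2)
    \<le> real H ^ 2 * (D * max_norm Q H F ^ 4 * (192 * (\<Sum>q<Q. 1 / real (m q))^2 / real n
        + 208 * (\<Sum>q<Q. 1 / real (m q) ^ 3)))"
proof -
  have "expect (\<lambda>z. \<Sum>h<H. \<Sum>h'<H. (Vhat n Q m Y F z h h' - EVhat n Q m Y F h h')^2)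
      \<le> (\<Sum>h<H. \<Sum>h'<H. D * max_norm Q H F ^ 4 * (192 * (\<Sum>q<Q. 1 / real (m q))^2 / real n
        + 208 * (\<Sum>q<Q. 1 / real (m q) ^ 3)))"
    unfolding expect_sum by (intro sum_mono expect_Vhat_entry_dev_sq_le) auto
  then show ?thesis by (simp add: power2_eq_square)
qed

end

end

context randomized_experiment
begin

lemma inverse_group_size_le:
  assumes N0: "0 < N0" and nu: "\<And>q. q < Q \<Longrightarrow> real (m q) = c q * real N0 \<and> clow \<le> c q \<and> c q \<le> cup"
    and clow: "0 < clow" and q: "q < Q"
  shows "1 / real (m q) \<le> real Q * cup / (clow * real n)"
proof -
  have "real n = (\<Sum>q<Q. real (m q))" using sizes by (simp flip: of_nat_sum)
  also have "\<dots> \<le> (\<Sum>q<Q. cup * real N0)"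
    using nu by (intro sum_mono) (simp add: mult_right_mono)
  finally have "clow * real n \<le> real Q * cup * (clow * real N0)"
    using clow by (simp add: mult_ac mult_left_mono)
  also have "\<dots> \<le> real Q * cup * real (m q)"
    using nu[OF q] clow by (intro mult_left_mono) (auto simp: mult_right_mono)
  finally show ?thesis
    using group_size_ge_2[OF q] n_ge_2 clow by (simp add: divide_simps mult_ac)
qed

lemma expect_frobenius_dev_nearly_uniform:
  assumes moment: "\<And>q. q < Q \<Longrightarrow> (\<Sum>i<n. (Y i q - Ybar n Y q) ^ 4) / real n \<le> \<Delta> ^ 4"
    and N0: "0 < N0" and nu: "\<And>q. q < Q \<Longrightarrow> real (m q) = c q * real N0 \<and> clow \<le> c q \<and> c q \<le> cup"
    and clow: "0 < clow"
  shows "expect (\<lambda>z. \<Sum>h<H. \<Sum>h'<H. (Vhat n Q m Y F z h h' - EVhat n Q m Y F h h')^2)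
    \<le> (192 * cup^2 / clow^2 + 208 * cup^3 / clow^3)
       * (max_norm Q H F ^ 4 * real Q ^ 4 / real n ^ 3 * \<Delta> ^ 4 * real H ^ 2)"
proof -
  have mom: "(\<Sum>i<n. (resid q i)^4) \<le> real n * \<Delta> ^ 4" if "q < Q" for q
  proof -
    have "(\<Sum>i<n. (resid q i)^4) / real n \<le> \<Delta> ^ 4" using moment[OF that] by (simp add: resid_def)
    then show ?thesis using n_ge_2 by (simp add: divide_le_eq mult.commute)
  qed
  have "clow \<le> c 0 \<and> c 0 \<le> cup" using nu[of 0] Q_pos by simp
  then have cup: "0 < cup" using clow by linarith
  have inv: "\<And>q. q < Q \<Longrightarrow> 1 / real (m q) \<le> real Q * cup / (clow * real n)"
    by (rule inverse_group_size_le[OF N0 nu clow])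
  have npos: "0 < real n" using n_ge_2 by simp
  have rate: "192 * (\<Sum>q<Q. 1 / real (m q))^2 / real n + 208 * (\<Sum>q<Q. 1 / real (m q) ^ 3)
      \<le> (192 * cup^2 / clow^2 + 208 * cup^3 / clow^3) * (real Q ^ 4 / real n ^ 3)"
    by (rule inverse_group_sizes_rate[OF inv npos clow cup])
  have "expect (\<lambda>z. \<Sum>h<H. \<Sum>h'<H. (Vhat n Q m Y F z h h' - EVhat n Q m Y F h h')^2)
      \<le> real H ^ 2 * (\<Delta> ^ 4 * max_norm Q H F ^ 4 *
        (192 * (\<Sum>q<Q. 1 / real (m q))^2 / real n + 208 * (\<Sum>q<Q. 1 / real (m q) ^ 3)))"
    by (rule expect_frobenius_dev_le[OF mom])
  also have "\<dots> \<le> real H ^ 2 * (\<Delta> ^ 4 * max_norm Q H F ^ 4 *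
        ((192 * cup^2 / clow^2 + 208 * cup^3 / clow^3) * (real Q ^ 4 / real n ^ 3)))"
    using rate by (intro mult_left_mono) (auto simp: zero_le_even_power)
  also have "\<dots> = (192 * cup^2 / clow^2 + 208 * cup^3 / clow^3)
       * (max_norm Q H F ^ 4 * real Q ^ 4 / real n ^ 3 * \<Delta> ^ 4 * real H ^ 2)"
    by (simp add: mult_ac)
  finally show ?thesis .
qed

end

theorem theorem3:
  fixes N Q H :: "nat \<Rightarrow> nat"
    and Ng :: "nat \<Rightarrow> nat \<Rightarrow> nat"
    and N0 :: "nat \<Rightarrow> nat"
    and c :: "nat \<Rightarrow> nat \<Rightarrow> real"
    and clow cup :: real
    and Y :: "nat \<Rightarrow> nat \<Rightarrow> nat \<Rightarrow> real"
    and F :: "nat \<Rightarrow> nat \<Rightarrow> nat \<Rightarrow> real"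
    and \<Delta> :: "nat \<Rightarrow> real"
  assumes Qpos: "\<And>k. 1 \<le> Q k"
    and Hpos: "\<And>k. 1 \<le> H k"
    and sizes: "\<And>k. (\<Sum>q<Q k. Ng k q) = N k"
    and min_size: "\<And>k q. q < Q k \<Longrightarrow> 2 \<le> Ng k q"
    and c_bounds: "0 < clow" "clow \<le> cup"
    and nearly_uniform: "\<And>k. 0 < N0 k \<and>
          (\<forall>q<Q k. real (Ng k q) = c k q * real (N0 k) \<and> clow \<le> c k q \<and> c k q \<le> cup)"
    and cond3: "\<And>k q. q < Q k \<Longrightarrow>
          (\<Sum>i<N k. (Y k i q - Ybar (N k) (Y k) q) ^ 4) / real (N k) \<le> \<Delta> k ^ 4"
  shows
    "(\<forall>k. psd (H k) (\<lambda>h h'. EVhat (N k) (Q k) (Ng k) (Y k) (F k) h h'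
                              - Vgamma (N k) (Q k) (Ng k) (Y k) (F k) h h'))
     \<and> bigO_P (\<lambda>k. complete_rand (N k) (Q k) (Ng k))
         (\<lambda>k z. (max_norm (H k) (H k) (\<lambda>h h'. Vhat (N k) (Q k) (Ng k) (Y k) (F k) z h h'
                                      - EVhat (N k) (Q k) (Ng k) (Y k) (F k) h h')) ^ 2)
         (\<lambda>k. max_norm (Q k) (H k) (F k) ^ 4 * real (Q k) ^ 4 / real (N k) ^ 3
               * \<Delta> k ^ 4 * real (H k) ^ 2)
     \<and> bigO_P (\<lambda>k. complete_rand (N k) (Q k) (Ng k))
         (\<lambda>k z. (op_norm (H k) (H k) (\<lambda>h h'. Vhat (N k) (Q k) (Ng k) (Y k) (F k) z h h'
                                      - EVhat (N k) (Q k) (Ng k) (Y k) (F k) h h')) ^ 2)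
         (\<lambda>k. max_norm (Q k) (H k) (F k) ^ 4 * real (Q k) ^ 4 / real (N k) ^ 3
               * \<Delta> k ^ 4 * real (H k) ^ 4)"
proof -
  interpret E: randomized_experiment "N k" "Q k" "Ng k" "Y k" for k
    using Qpos sizes min_size by unfold_locales auto
  define frob where "frob k z = (\<Sum>h<H k. \<Sum>h'<H k. (Vhat (N k) (Q k) (Ng k) (Y k) (F k) z h h'
                                      - EVhat (N k) (Q k) (Ng k) (Y k) (F k) h h')^2)" for k z
  define r where "r k = max_norm (Q k) (H k) (F k) ^ 4 * real (Q k) ^ 4 / real (N k) ^ 3
               * \<Delta> k ^ 4 * real (H k) ^ 2" for k
  have r0: "0 \<le> r k" for k
    unfolding r_def by (intro mult_nonneg_nonneg divide_nonneg_nonneg) (auto simp: zero_le_even_power)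
  have "bigO_P (\<lambda>k. complete_rand (N k) (Q k) (Ng k)) frob r"
  proof (rule bigO_P_of_mean_le[OF complete_rand_def assignments_finite assignments_nonempty[OF sizes]])
    fix k
    have "0 < N0 k" "\<And>q. q < Q k \<Longrightarrow> real (Ng k q) = c k q * real (N0 k) \<and> clow \<le> c k q \<and> c k q \<le> cup"
      using nearly_uniform[of k] by auto
    from E.expect_frobenius_dev_nearly_uniform[OF cond3 this c_bounds(1)]
    show "(\<Sum>z\<in>assignments (N k) (Q k) (Ng k). frob k z) / card (assignments (N k) (Q k) (Ng k))
        \<le> (192 * cup^2 / clow^2 + 208 * cup^3 / clow^3) * r k"
      unfolding E.expect_def E.\<Omega>_def frob_def r_def .
  qed (use r0 c_bounds in \<open>simp_all add: frob_def sum_nonneg\<close>)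
  note frob = this[unfolded frob_def]
  have r_le: "r k \<le> max_norm (Q k) (H k) (F k) ^ 4 * real (Q k) ^ 4 / real (N k) ^ 3 * \<Delta> k ^ 4 * real (H k) ^ 4"
    for k using r0[of k] Hpos[of k] unfolding r_def
    by (intro mult_left_mono power_increasing) (auto simp: zero_le_even_power)
  show ?thesis
    unfolding r_def[symmetric]
    by (intro conjI allI E.psd_EVhat_minus_Vgamma bigO_P_max_norm_sq_of_frobenius[OF frob r0]
        bigO_P_op_norm_sq_of_frobenius[OF frob r0 r_le])
qed

end
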